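(* Let $\tau$ be a pure type. For every $\delta \in \mathcal{L}^\wedge(\tau)$, if $[\![\delta]\!] \neq \emptyset$ then $[\![\delta]\!] = {\uparrow} d = \{x \in [\![\tau]\!] \mid d \le x\}$ for some finite element $d \in [\![\tau]\!]$. Conversely, for every finite element $d \in [\![\tau]\!]$ there is some $\delta \in \mathcal{L}^\wedge(\tau)$ such that ${\uparrow} d = [\![\delta]\!]$.
   Context: Pure types: closed types of $\tau ::= \mathbf{1} \mid \tau\times\tau \mid \tau\to\tau \mid \tau+\tau \mid \alpha \mid \mu\alpha.\tau$, interpreted as Scott domains: $[\![\mathbf{1}]\!]=\{\bot\le\top\}$; products componentwise with projections $\pi_1,\pi_2$; $[\![\tau\to\sigma]\!]$ = Scott-continuous functions with pointwise order; $[\![\tau_1+\tau_2]\!]$ = disjoint union with a new least element, with injections $\mathrm{inj}_i$; $[\![\mu\alpha.\tau]\!]$ = canonical embedding–projection bilimit solution with inverse isomorphisms $\mathrm{fold}:[\![\tau[\mu\alpha.\tau/\alpha]]\!]\to[\![\mu\alpha.\tau]\!]$, $\mathrm{unfold}$. An element $d$ of a dcpo is finite (compact) if whenever $d\le\bigvee D$ with $D$ directed, $d\le e$ for some $e\in D$. The formulas $\mathcal{L}^\wedge(\tau)$ (closed, without fixpoint or iteration variables, without binary disjunction) are generated by: $\mathrm{True},\mathrm{False}\in\mathcal{L}^\wedge(\tau)$; $\varphi\wedge\psi$; $\langle()\rangle\in\mathcal{L}^\wedge(\mathbf{1})$; $\langle\pi_i\rangle\varphi\in\mathcal{L}^\wedge(\tau_1\times\tau_2)$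 for $\varphi\in\mathcal{L}^\wedge(\tau_i)$; $\langle\mathrm{inj}_i\rangle\varphi\in\mathcal{L}^\wedge(\tau_1+\tau_2)$ for $\varphi\in\mathcal{L}^\wedge(\tau_i)$; $\langle\mathrm{fold}\rangle\varphi\in\mathcal{L}^\wedge(\mu\alpha.\tau)$ for $\varphi\in\mathcal{L}^\wedge(\tau[\mu\alpha.\tau/\alpha])$; $\psi\Rightarrow\varphi\in\mathcal{L}^\wedge(\sigma\to\tau)$ for $\psi\in\mathcal{L}^\wedge(\sigma)$, $\varphi\in\mathcal{L}^\wedge(\tau)$. Semantics: $[\![\mathrm{True}]\!]=[\![\tau]\!]$, $[\![\mathrm{False}]\!]=\emptyset$, $[\![\varphi\wedge\psi]\!]=[\![\varphi]\!]\cap[\![\psi]\!]$, $[\![\langle()\rangle]\!]=\{\top\}$, $[\![\langle\pi_i\rangle\varphi]\!]=\{x\mid \pi_i(x)\in[\![\varphi]\!]\}$, $[\![\langle\mathrm{inj}_i\rangle\varphi]\!]=\{\mathrm{inj}_i(x)\mid x\in[\![\varphi]\!]\}$, $[\![\langle\mathrm{fold}\rangle\varphi]\!]=\{x\mid\mathrm{unfold}(x)\in[\![\varphi]\!]\}$, $[\![\psi\Rightarrow\varphi]\!]=\{f\mid\forall x\in[\![\psi]\!],\ f(x)\in[\![\varphi]\!]\}$. *)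

theory Defs
  imports Main
begin

datatype ty = TUnit | TProd ty ty | TFun ty ty | TSum ty ty | TVar nat | TMu nat ty

primrec fv :: "ty \<Rightarrow> nat set" where
  "fv TUnit = {}"
| "fv (TProd t s) = fv t \<union> fv s"
| "fv (TFun t s) = fv t \<union> fv s"
| "fv (TSum t s) = fv t \<union> fv s"
| "fv (TVar a) = {a}"
| "fv (TMu a t) = fv t - {a}"

definition closed_ty :: "ty \<Rightarrow> bool" where
  "closed_ty t \<longleftrightarrow> fv t = {}"

text \<open>subst t a s = t[s/a]  (used with s closed, so no capture can occur).\<close>
primrec subst :: "ty \<Rightarrow> nat \<Rightarrow> ty \<Rightarrow> ty" where
  "subst TUnit a s = TUnit"
| "subst (TProd t1 t2) a s = TProd (subst t1 a s) (subst t2 a s)"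
| "subst (TFun t1 t2) a s = TFun (subst t1 a s) (subst t2 a s)"
| "subst (TSum t1 t2) a s = TSum (subst t1 a s) (subst t2 a s)"
| "subst (TVar b) a s = (if b = a then s else TVar b)"
| "subst (TMu b t) a s = (if b = a then TMu b t else TMu b (subst t a s))"

text \<open>simultaneous substitution (used with closed types in the range)\<close>
primrec csubst :: "(nat \<Rightarrow> ty) \<Rightarrow> ty \<Rightarrow> ty" where
  "csubst \<sigma> TUnit = TUnit"
| "csubst \<sigma> (TProd t1 t2) = TProd (csubst \<sigma> t1) (csubst \<sigma> t2)"
| "csubst \<sigma> (TFun t1 t2) = TFun (csubst \<sigma> t1) (csubst \<sigma> t2)"
| "csubst \<sigma> (TSum t1 t2) = TSum (csubst \<sigma> t1) (csubst \<sigma> t2)"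
| "csubst \<sigma> (TVar b) = \<sigma> b"
| "csubst \<sigma> (TMu b t) = TMu b (csubst (\<sigma>(b := TVar b)) t)"

definition po_on :: "'u set \<Rightarrow> ('u \<Rightarrow> 'u \<Rightarrow> bool) \<Rightarrow> bool" where
  "po_on A r \<longleftrightarrow> (\<forall>x\<in>A. r x x) \<and> (\<forall>x\<in>A. \<forall>y\<in>A. r x y \<and> r y x \<longrightarrow> x = y)
     \<and> (\<forall>x\<in>A. \<forall>y\<in>A. \<forall>z\<in>A. r x y \<and> r y z \<longrightarrow> r x z)"

definition directed_in :: "'u set \<Rightarrow> ('u \<Rightarrow> 'u \<Rightarrow> bool) \<Rightarrow> 'u set \<Rightarrow> bool" where
  "directed_in A r S \<longleftrightarrow> S \<subseteq> A \<and> S \<noteq> {} \<and> (\<forall>x\<in>S. \<forall>y\<in>S. \<exists>z\<in>S. r x z \<and> r y z)"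

definition is_lub :: "'u set \<Rightarrow> ('u \<Rightarrow> 'u \<Rightarrow> bool) \<Rightarrow> 'u set \<Rightarrow> 'u \<Rightarrow> bool" where
  "is_lub A r S x \<longleftrightarrow> x \<in> A \<and> (\<forall>y\<in>S. r y x) \<and> (\<forall>z\<in>A. (\<forall>y\<in>S. r y z) \<longrightarrow> r x z)"

definition is_dcpo :: "'u set \<Rightarrow> ('u \<Rightarrow> 'u \<Rightarrow> bool) \<Rightarrow> bool" where
  "is_dcpo A r \<longleftrightarrow> po_on A r \<and> (\<forall>S. directed_in A r S \<longrightarrow> (\<exists>x. is_lub A r S x))"

definition pointed :: "'u set \<Rightarrow> ('u \<Rightarrow> 'u \<Rightarrow> bool) \<Rightarrow> bool" where
  "pointed A r \<longleftrightarrow> (\<exists>b\<in>A. \<forall>x\<in>A. r b x)"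

definition scott_cont ::
  "'u set \<Rightarrow> ('u \<Rightarrow> 'u \<Rightarrow> bool) \<Rightarrow> 'u set \<Rightarrow> ('u \<Rightarrow> 'u \<Rightarrow> bool) \<Rightarrow> ('u \<Rightarrow> 'u) \<Rightarrow> bool" where
  "scott_cont A r B s f \<longleftrightarrow> (\<forall>x\<in>A. f x \<in> B) \<and> (\<forall>x\<in>A. \<forall>y\<in>A. r x y \<longrightarrow> s (f x) (f y))
     \<and> (\<forall>S x. directed_in A r S \<and> is_lub A r S x \<longrightarrow> is_lub B s (f ` S) (f x))"

definition compact_el :: "'u set \<Rightarrow> ('u \<Rightarrow> 'u \<Rightarrow> bool) \<Rightarrow> 'u \<Rightarrow> bool" where
  "compact_el A r d \<longleftrightarrow> d \<in> A \<and>
     (\<forall>S x. directed_in A r S \<and> is_lub A r S x \<and> r d x \<longrightarrow> (\<exists>e\<in>S. r d e))"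

text \<open>All domains live in one HOL type 'u.  Operations are indexed by the
  (closed) type they belong to: m_pi1 T, m_pi2 T for T = TProd t s;
  m_app T for T = TFun s t; m_inj1 T, m_inj2 T for T = TSum t s;
  m_fold T, m_unfold T for T = TMu a t; m_top is the top of the unit domain.\<close>

record 'u pmodel =
  m_dom :: "ty \<Rightarrow> 'u set"
  m_le :: "ty \<Rightarrow> 'u \<Rightarrow> 'u \<Rightarrow> bool"
  m_top :: 'u
  m_pi1 :: "ty \<Rightarrow> 'u \<Rightarrow> 'u"
  m_pi2 :: "ty \<Rightarrow> 'u \<Rightarrow> 'u"
  m_app :: "ty \<Rightarrow> 'u \<Rightarrow> 'u \<Rightarrow> 'u"
  m_inj1 :: "ty \<Rightarrow> 'u \<Rightarrow> 'u"
  m_inj2 :: "ty \<Rightarrow> 'u \<Rightarrow> 'u"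
  m_fold :: "ty \<Rightarrow> 'u \<Rightarrow> 'u"
  m_unfold :: "ty \<Rightarrow> 'u \<Rightarrow> 'u"

definition bottomM :: "'u pmodel \<Rightarrow> ty \<Rightarrow> 'u" where
  "bottomM M T = (THE b. b \<in> m_dom M T \<and> (\<forall>x\<in>m_dom M T. m_le M T b x))"

definition lubM :: "'u pmodel \<Rightarrow> ty \<Rightarrow> 'u set \<Rightarrow> 'u" where
  "lubM M T S = (THE x. is_lub (m_dom M T) (m_le M T) S x)"

definition pairM :: "'u pmodel \<Rightarrow> ty \<Rightarrow> 'u \<Rightarrow> 'u \<Rightarrow> 'u" where
  "pairM M T a b = (THE x. x \<in> m_dom M T \<and> m_pi1 M T x = a \<and> m_pi2 M T x = b)"

definition lamM :: "'u pmodel \<Rightarrow> ty \<Rightarrow> ty \<Rightarrow> ('u \<Rightarrow> 'u) \<Rightarrow> 'u" where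
  "lamM M S T g = (THE f. f \<in> m_dom M T \<and> (\<forall>x\<in>m_dom M S. m_app M T f x = g x))"

text \<open>Functorial action of a (possibly open) type on endomaps, in the
  mixed-variance form F(e,e) used for minimal invariance.  The environment
  assigns to each type variable a closed type and an endomap on its domain;
  act M env t acts on the domain of csubst (fst o env) t.  For a (nested)
  recursive type the action is the least fixed point, computed pointwise as
  the lub of the Kleene iterates.\<close>

primrec act :: "'u pmodel \<Rightarrow> (nat \<Rightarrow> ty \<times> ('u \<Rightarrow> 'u)) \<Rightarrow> ty \<Rightarrow> 'u \<Rightarrow> 'u" where
  "act M env TUnit = id"
| "act M env (TVar a) = snd (env a)"
| "act M env (TProd t s) =
     (let T = csubst (fst \<circ> env) (TProd t s)
      in (\<lambda>x. pairM M T (act M env t (m_pi1 M T x)) (act M env s (m_pi2 M T x))))"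
| "act M env (TFun t s) =
     (let T = csubst (fst \<circ> env) (TFun t s); S1 = csubst (fst \<circ> env) t
      in (\<lambda>f. lamM M S1 T (\<lambda>x. act M env s (m_app M T f (act M env t x)))))"
| "act M env (TSum t s) =
     (let T = csubst (fst \<circ> env) (TSum t s); T1 = csubst (fst \<circ> env) t;
          T2 = csubst (fst \<circ> env) s
      in (\<lambda>x. if \<exists>y\<in>m_dom M T1. x = m_inj1 M T y
              then m_inj1 M T (act M env t (THE y. y \<in> m_dom M T1 \<and> x = m_inj1 M T y))
              else if \<exists>y\<in>m_dom M T2. x = m_inj2 M T y
              then m_inj2 M T (act M env s (THE y. y \<in> m_dom M T2 \<and> x = m_inj2 M T y))
              else x))"
| "act M env (TMu b t) =
     (let T = csubst (fst \<circ> env) (TMu b t);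
          \<Phi> = (\<lambda>g. m_fold M T \<circ> act M (env(b := (T, g))) t \<circ> m_unfold M T)
      in (\<lambda>x. lubM M T {(\<Phi> ^^ n) (\<lambda>_. bottomM M T) x | n. True}))"

text \<open>The canonical interpretation of the pure types, characterised up to
  isomorphism: the base constructions (two-point unit, cartesian product with
  projections, Scott-continuous function space with pointwise order, separated
  sum with a new least element, fold/unfold order isomorphisms) together with
  minimal invariance of every recursive type (which characterises the
  canonical bilimit solution).\<close>

definition pure_model :: "'u pmodel \<Rightarrow> bool" where
  "pure_model M \<longleftrightarrow>
   (let D = m_dom M; le = m_le M in
    (\<forall>T. closed_ty T \<longrightarrow> is_dcpo (D T) (le T) \<and> pointed (D T) (le T))
  \<and> (\<exists>b. D TUnit = {b, m_top M} \<and> b \<noteq> m_top M \<and> le TUnit b (m_top M)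
         \<and> \<not> le TUnit (m_top M) b)
  \<and> (\<forall>t s. closed_ty (TProd t s) \<longrightarrow>
       (let T = TProd t s in
         bij_betw (\<lambda>x. (m_pi1 M T x, m_pi2 M T x)) (D T) (D t \<times> D s)
       \<and> (\<forall>x\<in>D T. \<forall>y\<in>D T. le T x y \<longleftrightarrow>
             le t (m_pi1 M T x) (m_pi1 M T y) \<and> le s (m_pi2 M T x) (m_pi2 M T y))))
  \<and> (\<forall>s t. closed_ty (TFun s t) \<longrightarrow>
       (let T = TFun s t in
         (\<forall>f\<in>D T. scott_cont (D s) (le s) (D t) (le t) (m_app M T f))
       \<and> (\<forall>g. scott_cont (D s) (le s) (D t) (le t) g \<longrightarrow>
             (\<exists>f\<in>D T. \<forall>x\<in>D s. m_app M T f x = g x))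
       \<and> (\<forall>f\<in>D T. \<forall>g\<in>D T. le T f g \<longleftrightarrow>
             (\<forall>x\<in>D s. le t (m_app M T f x) (m_app M T g x)))))
  \<and> (\<forall>t s. closed_ty (TSum t s) \<longrightarrow>
       (let T = TSum t s; i1 = m_inj1 M T; i2 = m_inj2 M T in
         inj_on i1 (D t) \<and> inj_on i2 (D s) \<and> i1 ` D t \<inter> i2 ` D s = {}
       \<and> (\<exists>b. b \<notin> i1 ` D t \<union> i2 ` D s \<and> D T = insert b (i1 ` D t \<union> i2 ` D s)
            \<and> (\<forall>x\<in>D T. le T b x)
            \<and> (\<forall>x\<in>D t. \<not> le T (i1 x) b) \<and> (\<forall>y\<in>D s. \<not> le T (i2 y) b))
       \<and> (\<forall>x\<in>D t. \<forall>y\<in>D t. le T (i1 x) (i1 y) \<longleftrightarrow> le t x y)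
       \<and> (\<forall>x\<in>D s. \<forall>y\<in>D s. le T (i2 x) (i2 y) \<longleftrightarrow> le s x y)
       \<and> (\<forall>x\<in>D t. \<forall>y\<in>D s. \<not> le T (i1 x) (i2 y) \<and> \<not> le T (i2 y) (i1 x))))
  \<and> (\<forall>a t. closed_ty (TMu a t) \<longrightarrow>
       (let T = TMu a t; U = subst t a T in
         bij_betw (m_unfold M T) (D T) (D U)
       \<and> (\<forall>x\<in>D T. m_fold M T (m_unfold M T x) = x)
       \<and> (\<forall>y\<in>D U. m_unfold M T (m_fold M T y) = y)
       \<and> (\<forall>x\<in>D T. \<forall>y\<in>D T. le T x y \<longleftrightarrow> le U (m_unfold M T x) (m_unfold M T y))
       \<and> (\<forall>x\<in>D T. act M (\<lambda>_. (TUnit, id)) T x = x))))"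

section \<open>The logic L^\<and> (closed, no fixpoint/iteration variables, no disjunction)\<close>

datatype form = FTrue | FFalse | FAnd form form | FUnit
  | FPi1 form | FPi2 form | FInj1 form | FInj2 form | FFold form | FImp form form

fun wf_form :: "ty \<Rightarrow> form \<Rightarrow> bool" where
  "wf_form t FTrue = True"
| "wf_form t FFalse = True"
| "wf_form t (FAnd p q) = (wf_form t p \<and> wf_form t q)"
| "wf_form t FUnit = (t = TUnit)"
| "wf_form t (FPi1 p) = (case t of TProd t1 t2 \<Rightarrow> wf_form t1 p | _ \<Rightarrow> False)"
| "wf_form t (FPi2 p) = (case t of TProd t1 t2 \<Rightarrow> wf_form t2 p | _ \<Rightarrow> False)"
| "wf_form t (FInj1 p) = (case t of TSum t1 t2 \<Rightarrow> wf_form t1 p | _ \<Rightarrow> False)"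
| "wf_form t (FInj2 p) = (case t of TSum t1 t2 \<Rightarrow> wf_form t2 p | _ \<Rightarrow> False)"
| "wf_form t (FFold p) = (case t of TMu a t1 \<Rightarrow> wf_form (subst t1 a t) p | _ \<Rightarrow> False)"
| "wf_form t (FImp q p) = (case t of TFun s t2 \<Rightarrow> wf_form s q \<and> wf_form t2 p | _ \<Rightarrow> False)"

fun sem :: "'u pmodel \<Rightarrow> ty \<Rightarrow> form \<Rightarrow> 'u set" where
  "sem M t FTrue = m_dom M t"
| "sem M t FFalse = {}"
| "sem M t (FAnd p q) = sem M t p \<inter> sem M t q"
| "sem M t FUnit = {m_top M}"
| "sem M t (FPi1 p) = (case t of TProd t1 t2 \<Rightarrow>
      {x \<in> m_dom M t. m_pi1 M t x \<in> sem M t1 p} | _ \<Rightarrow> {})"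
| "sem M t (FPi2 p) = (case t of TProd t1 t2 \<Rightarrow>
      {x \<in> m_dom M t. m_pi2 M t x \<in> sem M t2 p} | _ \<Rightarrow> {})"
| "sem M t (FInj1 p) = (case t of TSum t1 t2 \<Rightarrow> m_inj1 M t ` sem M t1 p | _ \<Rightarrow> {})"
| "sem M t (FInj2 p) = (case t of TSum t1 t2 \<Rightarrow> m_inj2 M t ` sem M t2 p | _ \<Rightarrow> {})"
| "sem M t (FFold p) = (case t of TMu a t1 \<Rightarrow>
      {x \<in> m_dom M t. m_unfold M t x \<in> sem M (subst t1 a t) p} | _ \<Rightarrow> {})"
| "sem M t (FImp q p) = (case t of TFun s t2 \<Rightarrow>
      {f \<in> m_dom M t. \<forall>x\<in>sem M s q. m_app M t f x \<in> sem M t2 p} | _ \<Rightarrow> {})"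

definition upset :: "'u pmodel \<Rightarrow> ty \<Rightarrow> 'u \<Rightarrow> 'u set" where
  "upset M t d = {x \<in> m_dom M t. m_le M t d x}"

end

theory Submission
  imports Defs
begin

text \<open>
  Every finite conjunction of formulas denotes either the empty set or the upset of a compact
  element. This is proved by induction on the weight of the conjunction: conjunctions and True
  are flattened away, and otherwise all conjuncts are modalities of the outermost type
  constructor, so the conjunction reduces to conjunctions at the component types. At a function
  type a conjunction of implications q_i => p_i denotes the upset of the step function sending x
  to the generator of the conjunction of those p_i with x in [q_i]; it is continuous because the
  [q_i] are finitely many Scott open sets.

  Conversely, call a map g separated if g x is not below z only when some formula holds at x and
  fails at z. By induction on open types, the functorial action of a type in an environment of
  continuous separated maps is separated: a recursive type acts by the lub of the Kleene
  approximants, each separated by induction, and at a function type the argument is approximated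
  by the directed set of definable compact elements below it. By minimal invariance the identity
  of a closed type is such an action, so every x lies below the lub of the definable compact
  elements below it; for compact x one of them is x itself.
\<close>

section \<open>Directed sets, lubs and Scott continuity\<close>

lemma po_on_trans:
  "po_on A r \<Longrightarrow> x \<in> A \<Longrightarrow> y \<in> A \<Longrightarrow> z \<in> A \<Longrightarrow> r x y \<Longrightarrow> r y z \<Longrightarrow> r x z"
  unfolding po_on_def by blast

lemma is_lub_in: "is_lub A r S x \<Longrightarrow> x \<in> A"
  unfolding is_lub_def by auto

lemma is_lub_unique:
  assumes "po_on A r" "is_lub A r S x" "is_lub A r S y" shows "x = y"
  using assms unfolding po_on_def is_lub_def by blast

lemma directed_in_finite_ub:
  assumes po: "po_on A r" and dir: "directed_in A r S" and fin: "finite F" and sub: "F \<subseteq> S"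
  shows "\<exists>z\<in>S. \<forall>y\<in>F. r y z"
  using fin sub
proof (induction F)
  case empty then show ?case using dir unfolding directed_in_def by auto
next
  case (insert a F)
  then obtain z where z: "z \<in> S" "\<forall>y\<in>F. r y z" by auto
  obtain w where w: "w \<in> S" "r a w" "r z w" using dir insert.prems z unfolding directed_in_def by blast
  have "S \<subseteq> A" using dir unfolding directed_in_def by auto
  then have "\<forall>y\<in>F. r y w" using po w z insert.prems unfolding po_on_def by blast
  then show ?case using w by auto
qed

lemma directed_in_finite_choice:
  assumes po: "po_on A r" and dir: "directed_in A r S" and fin: "finite I"
    and ex: "\<forall>i\<in>I. \<exists>s\<in>S. P i s"
    and up: "\<forall>i\<in>I. \<forall>s\<in>S. \<forall>s'\<in>S. P i s \<and> r s s' \<longrightarrow> P i s'"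
  shows "\<exists>s\<in>S. \<forall>i\<in>I. P i s"
proof -
  from ex obtain f where f: "\<forall>i\<in>I. f i \<in> S \<and> P i (f i)" by metis
  then obtain z where "z \<in> S" "\<forall>y\<in>f ` I. r y z"
    using directed_in_finite_ub[OF po dir finite_imageI[OF fin]] by blast
  then show ?thesis using up f by blast
qed

lemma directed_in_image:
  assumes "directed_in A r S" "\<forall>x\<in>A. f x \<in> B" "\<forall>x\<in>A. \<forall>y\<in>A. r x y \<longrightarrow> s (f x) (f y)"
  shows "directed_in B s (f ` S)"
proof -
  have "\<forall>x\<in>f ` S. \<forall>y\<in>f ` S. \<exists>z\<in>f ` S. s x z \<and> s y z"
  proof (intro ballI)
    fix x y assume "x \<in> f ` S" "y \<in> f ` S"
    then obtain x' y' where "x' \<in> S" "y' \<in> S" "x = f x'" "y = f y'" by auto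
    moreover then obtain z where "z \<in> S" "r x' z" "r y' z" using assms(1) unfolding directed_in_def by blast
    ultimately show "\<exists>z\<in>f ` S. s x z \<and> s y z" using assms unfolding directed_in_def by blast
  qed
  then show ?thesis using assms unfolding directed_in_def by auto
qed

lemma directed_in_chain:
  assumes po: "po_on A r" and inA: "\<forall>n. a n \<in> A" and step: "\<forall>n. r (a n) (a (Suc n))"
  shows "directed_in A r (range a)"
proof -
  have le: "r (a m) (a n)" if "m \<le> n" for m n
    using that
  proof (induction n)
    case 0 then show ?case using po inA unfolding po_on_def by blast
  next
    case (Suc n)
    show ?case
    proof (cases "m = Suc n")
      case True then show ?thesis using po inA unfolding po_on_def by blast
    next
      case False
      then have "r (a m) (a n)" using Suc by auto
      then show ?thesis using po inA step unfolding po_on_def by blast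
    qed
  qed
  have "\<exists>z\<in>range a. r (a m) z \<and> r (a n) z" for m n
    using le[of m "max m n"] le[of n "max m n"] by auto
  then show ?thesis unfolding directed_in_def using inA by auto
qed

lemma scott_cont_mono:
  "scott_cont A r B s f \<Longrightarrow> x \<in> A \<Longrightarrow> y \<in> A \<Longrightarrow> r x y \<Longrightarrow> s (f x) (f y)"
  unfolding scott_cont_def by blast

lemma scott_cont_in: "scott_cont A r B s f \<Longrightarrow> x \<in> A \<Longrightarrow> f x \<in> B"
  unfolding scott_cont_def by blast

lemma scott_cont_lub:
  "scott_cont A r B s f \<Longrightarrow> directed_in A r S \<Longrightarrow> is_lub A r S x \<Longrightarrow> is_lub B s (f ` S) (f x)"
  unfolding scott_cont_def by blast

lemma scott_cont_directed_image:
  "scott_cont A r B s f \<Longrightarrow> directed_in A r S \<Longrightarrow> directed_in B s (f ` S)"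
  by (rule directed_in_image) (auto simp: scott_cont_def)

lemma scott_cont_comp:
  assumes f: "scott_cont A r B s f" and g: "scott_cont B s C q g"
  shows "scott_cont A r C q (g \<circ> f)"
  unfolding scott_cont_def
proof (intro conjI allI impI ballI)
  show "(g \<circ> f) x \<in> C" if "x \<in> A" for x
    using that f g by (simp add: scott_cont_in)
  show "q ((g \<circ> f) x) ((g \<circ> f) y)" if "x \<in> A" "y \<in> A" "r x y" for x y
    using that f g by (simp add: scott_cont_in scott_cont_mono)
  fix S x assume "directed_in A r S \<and> is_lub A r S x"
  then have "is_lub C q (g ` f ` S) (g (f x))"
    using f g by (meson scott_cont_lub scott_cont_directed_image)
  then show "is_lub C q ((g \<circ> f) ` S) ((g \<circ> f) x)" by (simp add: image_comp)
qed

lemma scott_cont_pointwise_lub: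
  assumes cont: "\<forall>i\<in>I. scott_cont A r B s (p i)"
    and lub: "\<forall>x\<in>A. is_lub B s ((\<lambda>i. p i x) ` I) (h x)"
    and po: "po_on B s"
  shows "scott_cont A r B s h"
proof -
  have hB: "h x \<in> B" if "x \<in> A" for x using lub that unfolding is_lub_def by auto
  have pB: "p i x \<in> B" if "i \<in> I" "x \<in> A" for i x
    using scott_cont_in[OF cont[rule_format, OF that(1)] that(2)] .
  have p_le_h: "s (p i x) (h x)" if "i \<in> I" "x \<in> A" for i x
    using lub that unfolding is_lub_def by blast
  have h_least: "s (h x) z" if "x \<in> A" "z \<in> B" "\<forall>i\<in>I. s (p i x) z" for x z
    using lub that unfolding is_lub_def by blast
  have mono: "s (h x) (h y)" if xy: "x \<in> A" "y \<in> A" "r x y" for x y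
  proof -
    have "s (p i x) (h y)" if "i \<in> I" for i
      using po_on_trans[OF po pB[OF that xy(1)] pB[OF that xy(2)] hB[OF xy(2)]]
        scott_cont_mono[OF cont[rule_format, OF that] xy] p_le_h[OF that xy(2)] by blast
    then show ?thesis using h_least xy hB by blast
  qed
  have "is_lub B s (h ` S) (h x)" if a: "directed_in A r S" "is_lub A r S x" for S x
  proof -
    have xA: "x \<in> A" and SA: "S \<subseteq> A" using a unfolding is_lub_def directed_in_def by auto
    have "s (h x) z" if z: "z \<in> B" "\<forall>y\<in>h ` S. s y z" for z
    proof (rule h_least[OF xA z(1)], intro ballI)
      fix i assume i: "i \<in> I"
      have "\<forall>y\<in>S. s (p i y) z"
        using po_on_trans[OF po pB[OF i] hB z(1)] p_le_h[OF i] z SA by blast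
      then show "s (p i x) z"
        using scott_cont_lub[OF cont[rule_format, OF i] a] z(1) unfolding is_lub_def by blast
    qed
    moreover have "\<forall>y\<in>h ` S. s y (h x)" using mono a SA xA unfolding is_lub_def by blast
    ultimately show ?thesis using hB[OF xA] unfolding is_lub_def by blast
  qed
  then show ?thesis using mono hB unfolding scott_cont_def by blast
qed

lemma scott_cont_order_iso:
  assumes fA: "\<forall>x\<in>A. f x \<in> B" and gB: "\<forall>y\<in>B. g y \<in> A" and fg: "\<forall>y\<in>B. f (g y) = y"
    and iff: "\<forall>x\<in>A. \<forall>y\<in>A. r x y \<longleftrightarrow> s (f x) (f y)"
  shows "scott_cont A r B s f"
proof -
  have "is_lub B s (f ` S) (f x)" if a: "directed_in A r S" "is_lub A r S x" for S x
  proof -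
    have SA: "S \<subseteq> A" and xA: "x \<in> A" using a unfolding directed_in_def is_lub_def by auto
    have "s (f x) z" if z: "z \<in> B" "\<forall>y\<in>f ` S. s y z" for z
    proof -
      have "\<forall>y\<in>S. r y (g z)" using z SA iff gB fg by (metis image_eqI subsetD)
      then have "r x (g z)" using a gB z unfolding is_lub_def by blast
      then show ?thesis using iff xA gB z fg by metis
    qed
    then show ?thesis using a iff SA xA fA unfolding is_lub_def by blast
  qed
  then show ?thesis using fA iff unfolding scott_cont_def by blast
qed

lemma compact_el_preimage_upsets:
  assumes f1: "scott_cont B s A1 r1 f1" and f2: "scott_cont B s A2 r2 f2"
    and po: "po_on A1 r1" "po_on A2 r2"
    and d: "compact_el A1 r1 d1" "compact_el A2 r2 d2"
    and c: "c \<in> B" "\<forall>y\<in>B. s c y \<longleftrightarrow> r1 d1 (f1 y) \<and> r2 d2 (f2 y)"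
  shows "compact_el B s c"
  unfolding compact_el_def
proof (intro conjI allI impI)
  show "c \<in> B" by (rule c(1))
  fix S x assume a: "directed_in B s S \<and> is_lub B s S x \<and> s c x"
  have SB: "S \<subseteq> B" and xB: "x \<in> B" using a unfolding directed_in_def is_lub_def by auto
  have d12: "r1 d1 (f1 x)" "r2 d2 (f2 x)" using a c xB by auto
  have "\<exists>y\<in>S. r1 d1 (f1 y)"
  proof -
    have "directed_in A1 r1 (f1 ` S)" "is_lub A1 r1 (f1 ` S) (f1 x)"
      using scott_cont_directed_image[OF f1] scott_cont_lub[OF f1] a by blast+
    then show ?thesis using d(1) d12(1) unfolding compact_el_def by blast
  qed
  then obtain y1 where y1: "y1 \<in> S" "r1 d1 (f1 y1)" ..
  have "\<exists>y\<in>S. r2 d2 (f2 y)"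
  proof -
    have "directed_in A2 r2 (f2 ` S)" "is_lub A2 r2 (f2 ` S) (f2 x)"
      using scott_cont_directed_image[OF f2] scott_cont_lub[OF f2] a by blast+
    then show ?thesis using d(2) d12(2) unfolding compact_el_def by blast
  qed
  then obtain y2 where y2: "y2 \<in> S" "r2 d2 (f2 y2)" ..
  obtain z where z: "z \<in> S" "s y1 z" "s y2 z" using a y1 y2 unfolding directed_in_def by blast
  have in_B: "y1 \<in> B" "y2 \<in> B" "z \<in> B" using y1 y2 z SB by auto
  have "r1 (f1 y1) (f1 z)" "r2 (f2 y2) (f2 z)"
    using scott_cont_mono[OF f1] scott_cont_mono[OF f2] in_B z by auto
  moreover have "d1 \<in> A1" "d2 \<in> A2" using d unfolding compact_el_def by auto
  ultimately have "r1 d1 (f1 z)" "r2 d2 (f2 z)"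
    using po_on_trans[OF po(1)] po_on_trans[OF po(2)] y1 y2 in_B
      scott_cont_in[OF f1] scott_cont_in[OF f2] by meson+
  then show "\<exists>e\<in>S. s c e" using z c SB by blast
qed

section \<open>Types and substitution\<close>

lemma closed_ty_simps [simp]:
  "closed_ty TUnit"
  "closed_ty (TProd t s) \<longleftrightarrow> closed_ty t \<and> closed_ty s"
  "closed_ty (TFun t s) \<longleftrightarrow> closed_ty t \<and> closed_ty s"
  "closed_ty (TSum t s) \<longleftrightarrow> closed_ty t \<and> closed_ty s"
  "\<not> closed_ty (TVar a)"
  unfolding closed_ty_def by auto

lemma fv_subst: "fv (subst t a s) \<subseteq> (fv t - {a}) \<union> fv s"
  by (induction t) auto

lemma subst_nofv: "a \<notin> fv t \<Longrightarrow> subst t a s = t"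
  by (induction t) auto

lemma closed_ty_unfold: "closed_ty (TMu a t) \<Longrightarrow> closed_ty (subst t a (TMu a t))"
  using fv_subst[of t a "TMu a t"] unfolding closed_ty_def by auto

lemma fv_csubst: "fv (csubst \<sigma> t) \<subseteq> (\<Union>c\<in>fv t. fv (\<sigma> c))"
proof (induction t arbitrary: \<sigma>)
  case (TMu b t)
  show ?case
  proof
    fix x assume "x \<in> fv (csubst \<sigma> (TMu b t))"
    then have "x \<in> fv (csubst (\<sigma>(b := TVar b)) t)" "x \<noteq> b" by auto
    then obtain c where "c \<in> fv t" "x \<in> fv ((\<sigma>(b := TVar b)) c)" using TMu[of "\<sigma>(b := TVar b)"] by blast
    then show "x \<in> (\<Union>c\<in>fv (TMu b t). fv (\<sigma> c))" using \<open>x \<noteq> b\<close> by (cases "c = b") auto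
  qed
qed force+

lemma csubst_closed_ty: "\<forall>c\<in>fv t. closed_ty (\<sigma> c) \<Longrightarrow> closed_ty (csubst \<sigma> t)"
  using fv_csubst[of \<sigma> t] unfolding closed_ty_def by auto

lemma csubst_cong: "\<forall>c\<in>fv t. \<sigma> c = \<sigma>' c \<Longrightarrow> csubst \<sigma> t = csubst \<sigma>' t"
  by (induction t arbitrary: \<sigma> \<sigma>') auto

lemma csubst_TVar: "csubst TVar t = t"
proof (induction t)
  case (TMu b t)
  have "TVar(b := TVar b) = TVar" by auto
  then show ?case using TMu by simp
qed auto

lemma csubst_closed_id: "closed_ty t \<Longrightarrow> csubst \<sigma> t = t"
  using csubst_cong[of t \<sigma> TVar] csubst_TVar unfolding closed_ty_def by simp

lemma subst_csubst:
  "\<forall>c\<in>fv t - {b}. b \<notin> fv (\<sigma> c) \<Longrightarrow>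
   subst (csubst (\<sigma>(b := TVar b)) t) b T = csubst (\<sigma>(b := T)) t"
proof (induction t arbitrary: \<sigma>)
  case (TVar c)
  then show ?case by (auto simp: subst_nofv)
next
  case (TMu c t)
  show ?case
  proof (cases "c = b")
    case True
    then show ?thesis by (simp, intro arg_cong[where f="\<lambda>\<sigma>. csubst \<sigma> t"], auto simp: fun_eq_iff)
  next
    case False
    have "subst (csubst ((\<sigma>(c := TVar c))(b := TVar b)) t) b T = csubst ((\<sigma>(c := TVar c))(b := T)) t"
      using TMu.prems False by (intro TMu.IH) auto
    moreover have "(\<sigma>(c := TVar c))(b := TVar b) = (\<sigma>(b := TVar b))(c := TVar c)"
      "(\<sigma>(c := TVar c))(b := T) = (\<sigma>(b := T))(c := TVar c)" using False by (auto simp: fun_eq_iff)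
    ultimately show ?thesis using False by (simp del: fun_upd_apply)
  qed
qed auto

text \<open>The flag k = True selects the left summand of a sum, k = False the right one, so that one
  statement covers both injections.\<close>

fun pick :: "bool \<Rightarrow> 'a \<Rightarrow> 'a \<Rightarrow> 'a" where
  "pick True a b = a"
| "pick False a b = b"

section \<open>Conjunctions of formulas\<close>

text \<open>A list of formulas is read as their conjunction. Its weight decreases when a conjunction
  is split into its conjuncts, when FTrue is dropped, and when all formulas lose their
  outermost modality.\<close>

definition form_weight :: "form \<Rightarrow> nat" where
  "form_weight \<delta> = 2 * size \<delta> + 1"

definition conj_weight :: "form list \<Rightarrow> nat" where
  "conj_weight \<Delta> = sum_list (map form_weight \<Delta>)"

abbreviation FInj :: "bool \<Rightarrow> form \<Rightarrow> form" where
  "FInj k \<equiv> pick k FInj1 FInj2"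

lemma FInj_eq_iff [simp]: "FInj k p = FInj k' p' \<longleftrightarrow> k = k' \<and> p = p'"
  by (cases k; cases k') auto

definition inj_parts :: "bool \<Rightarrow> form list \<Rightarrow> form list" where
  "inj_parts k \<Delta> = pick k [p. FInj1 p \<leftarrow> \<Delta>] [p. FInj2 p \<leftarrow> \<Delta>]"

lemma set_modal_parts [simp]:
  "p \<in> set [p. FPi1 p \<leftarrow> \<Delta>] \<longleftrightarrow> FPi1 p \<in> set \<Delta>"
  "p \<in> set [p. FPi2 p \<leftarrow> \<Delta>] \<longleftrightarrow> FPi2 p \<in> set \<Delta>"
  "p \<in> set [p. FFold p \<leftarrow> \<Delta>] \<longleftrightarrow> FFold p \<in> set \<Delta>"
  "p \<in> set [p. FImp q p \<leftarrow> \<Delta>, P q] \<longleftrightarrow> (\<exists>q. FImp q p \<in> set \<Delta> \<and> P q)"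
  "p \<in> set (inj_parts k \<Delta>) \<longleftrightarrow> FInj k p \<in> set \<Delta>"
  unfolding inj_parts_def by (induction \<Delta>; cases k; auto split: form.split)+

lemma conj_weight_modal_parts:
  assumes "\<Delta> \<noteq> []"
  shows "conj_weight [p. FPi1 p \<leftarrow> \<Delta>] < conj_weight \<Delta>" "conj_weight [p. FPi2 p \<leftarrow> \<Delta>] < conj_weight \<Delta>"
    "conj_weight [p. FFold p \<leftarrow> \<Delta>] < conj_weight \<Delta>"
    "conj_weight [p. FImp q p \<leftarrow> \<Delta>, P q] < conj_weight \<Delta>"
    "conj_weight (inj_parts k \<Delta>) < conj_weight \<Delta>"
proof -
  have bounds: "conj_weight [p. FPi1 p \<leftarrow> \<Delta>] + length \<Delta> \<le> conj_weight \<Delta>"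
    "conj_weight [p. FPi2 p \<leftarrow> \<Delta>] + length \<Delta> \<le> conj_weight \<Delta>"
    "conj_weight [p. FFold p \<leftarrow> \<Delta>] + length \<Delta> \<le> conj_weight \<Delta>"
    "conj_weight [p. FImp q p \<leftarrow> \<Delta>, P q] + length \<Delta> \<le> conj_weight \<Delta>"
    "conj_weight (inj_parts k \<Delta>) + length \<Delta> \<le> conj_weight \<Delta>"
    unfolding inj_parts_def
    by (induction \<Delta>; cases k; auto simp: conj_weight_def form_weight_def split: form.split)+
  have "0 < length \<Delta>" using assms by simp
  then show "conj_weight [p. FPi1 p \<leftarrow> \<Delta>] < conj_weight \<Delta>" "conj_weight [p. FPi2 p \<leftarrow> \<Delta>] < conj_weight \<Delta>"
    "conj_weight [p. FFold p \<leftarrow> \<Delta>] < conj_weight \<Delta>"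
    "conj_weight [p. FImp q p \<leftarrow> \<Delta>, P q] < conj_weight \<Delta>"
    "conj_weight (inj_parts k \<Delta>) < conj_weight \<Delta>"
    using bounds by linarith+
qed

lemma wf_form_modal:
  assumes "wf_form T \<delta>" "\<delta> \<noteq> FTrue" "\<delta> \<noteq> FFalse" "\<forall>p q. \<delta> \<noteq> FAnd p q"
  shows "T = TUnit \<Longrightarrow> \<delta> = FUnit"
    "T = TProd t1 t2 \<Longrightarrow> (\<exists>p. \<delta> = FPi1 p \<and> wf_form t1 p) \<or> (\<exists>p. \<delta> = FPi2 p \<and> wf_form t2 p)"
    "T = TSum t1 t2 \<Longrightarrow> \<exists>k p. \<delta> = FInj k p \<and> wf_form (pick k t1 t2) p"
    "T = TFun t1 t2 \<Longrightarrow> \<exists>q p. \<delta> = FImp q p \<and> wf_form t1 q \<and> wf_form t2 p"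
    "T = TMu a t \<Longrightarrow> \<exists>p. \<delta> = FFold p \<and> wf_form (subst t a (TMu a t)) p"
  using assms by (cases \<delta>; auto intro: exI[of _ True] exI[of _ False])+

section \<open>Structure of the interpretation\<close>

locale pure_interp =
  fixes M :: "'u pmodel"
  assumes pure: "pure_model M"
begin

abbreviation D where "D \<equiv> m_dom M"
abbreviation R where "R \<equiv> m_le M"

lemmas axioms_unfolded = pure[unfolded pure_model_def Let_def]
lemmas dom_axioms = axioms_unfolded[THEN conjunct1]
lemmas unit_axioms = axioms_unfolded[THEN conjunct2, THEN conjunct1]
lemmas prod_axioms = axioms_unfolded[THEN conjunct2, THEN conjunct2, THEN conjunct1]
lemmas fun_axioms = axioms_unfolded[THEN conjunct2, THEN conjunct2, THEN conjunct2, THEN conjunct1]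
lemmas sum_axioms =
  axioms_unfolded[THEN conjunct2, THEN conjunct2, THEN conjunct2, THEN conjunct2, THEN conjunct1]
lemmas mu_axioms =
  axioms_unfolded[THEN conjunct2, THEN conjunct2, THEN conjunct2, THEN conjunct2, THEN conjunct2]

lemma po_on_dom: "closed_ty T \<Longrightarrow> po_on (D T) (R T)"
  using dom_axioms unfolding is_dcpo_def by blast

lemma R_refl: "closed_ty T \<Longrightarrow> x \<in> D T \<Longrightarrow> R T x x"
  using po_on_dom unfolding po_on_def by blast

lemma R_antisym: "closed_ty T \<Longrightarrow> x \<in> D T \<Longrightarrow> y \<in> D T \<Longrightarrow> R T x y \<Longrightarrow> R T y x \<Longrightarrow> x = y"
  using po_on_dom unfolding po_on_def by blast

lemma R_trans:
  "closed_ty T \<Longrightarrow> x \<in> D T \<Longrightarrow> y \<in> D T \<Longrightarrow> z \<in> D T \<Longrightarrow> R T x y \<Longrightarrow> R T y z \<Longrightarrow> R T x z"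
  by (rule po_on_trans[OF po_on_dom])

lemma lub_exists: "closed_ty T \<Longrightarrow> directed_in (D T) (R T) S \<Longrightarrow> \<exists>x. is_lub (D T) (R T) S x"
  using dom_axioms unfolding is_dcpo_def by blast

lemma lubM_eqI: "closed_ty T \<Longrightarrow> is_lub (D T) (R T) S x \<Longrightarrow> lubM M T S = x"
  unfolding lubM_def using is_lub_unique[OF po_on_dom] by blast

lemma lubM_is_lub: "closed_ty T \<Longrightarrow> directed_in (D T) (R T) S \<Longrightarrow> is_lub (D T) (R T) S (lubM M T S)"
  using lub_exists lubM_eqI by metis

lemma bottomM_eqI: "closed_ty T \<Longrightarrow> b \<in> D T \<Longrightarrow> \<forall>x\<in>D T. R T b x \<Longrightarrow> bottomM M T = b"
  unfolding bottomM_def by (rule the_equality) (auto intro: R_antisym)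

lemma bottomM_in: "closed_ty T \<Longrightarrow> bottomM M T \<in> D T"
  and bottomM_least: "closed_ty T \<Longrightarrow> x \<in> D T \<Longrightarrow> R T (bottomM M T) x"
  using dom_axioms bottomM_eqI unfolding pointed_def by metis+

lemma compact_bottomM: "closed_ty T \<Longrightarrow> compact_el (D T) (R T) (bottomM M T)"
  unfolding compact_el_def directed_in_def using bottomM_in bottomM_least by blast

lemma upset_bottomM: "closed_ty T \<Longrightarrow> upset M T (bottomM M T) = D T"
  unfolding upset_def using bottomM_least by auto

lemma in_upset_self: "closed_ty T \<Longrightarrow> c \<in> D T \<Longrightarrow> c \<in> upset M T c"
  unfolding upset_def using R_refl by auto

lemma upset_subset_imp_le: "closed_ty T \<Longrightarrow> c \<in> D T \<Longrightarrow> upset M T c \<subseteq> upset M T c' \<Longrightarrow> R T c' c"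
  using in_upset_self unfolding upset_def by blast

lemma upset_up_closed:
  "closed_ty T \<Longrightarrow> c \<in> D T \<Longrightarrow> x \<in> upset M T c \<Longrightarrow> y \<in> D T \<Longrightarrow> R T x y \<Longrightarrow> y \<in> upset M T c"
  unfolding upset_def using R_trans by blast

lemma compact_upset_Scott_open:
  assumes "compact_el (D T) (R T) d" "directed_in (D T) (R T) S" "is_lub (D T) (R T) S x"
    and "x \<in> upset M T d"
  shows "\<exists>s\<in>S. s \<in> upset M T d"
proof -
  have "\<exists>e\<in>S. R T d e" using assms unfolding compact_el_def upset_def by blast
  moreover have "S \<subseteq> D T" using assms(2) unfolding directed_in_def by auto
  ultimately show ?thesis unfolding upset_def by blast
qed

lemma unit_dom: "D TUnit = {bottomM M TUnit, m_top M}"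
  and bottom_ne_top: "bottomM M TUnit \<noteq> m_top M"
  and top_nle_bottom: "\<not> R TUnit (m_top M) (bottomM M TUnit)"
proof -
  obtain b where b: "D TUnit = {b, m_top M}" "b \<noteq> m_top M" "R TUnit b (m_top M)"
    "\<not> R TUnit (m_top M) b"
    using unit_axioms by blast
  have "bottomM M TUnit = b"
    using b(1,3) R_refl[of TUnit b] by (intro bottomM_eqI) auto
  then show "D TUnit = {bottomM M TUnit, m_top M}" "bottomM M TUnit \<noteq> m_top M"
    "\<not> R TUnit (m_top M) (bottomM M TUnit)"
    using b by simp_all
qed

lemma upset_top: "upset M TUnit (m_top M) = {m_top M}"
  unfolding upset_def using unit_dom R_refl[of TUnit "m_top M"] top_nle_bottom by auto

lemma compact_top: "compact_el (D TUnit) (R TUnit) (m_top M)"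
  unfolding compact_el_def
proof (intro conjI allI impI)
  show "m_top M \<in> D TUnit" using unit_dom by simp
  fix S x assume a: "directed_in (D TUnit) (R TUnit) S \<and> is_lub (D TUnit) (R TUnit) S x
    \<and> R TUnit (m_top M) x"
  have S: "S \<subseteq> {bottomM M TUnit, m_top M}" using a unit_dom unfolding directed_in_def by auto
  have x: "x = m_top M" using a unit_dom top_nle_bottom is_lub_in[of "D TUnit"] by force
  show "\<exists>e\<in>S. R TUnit (m_top M) e"
  proof (rule ccontr)
    assume "\<not> (\<exists>e\<in>S. R TUnit (m_top M) e)"
    then have "\<forall>e\<in>S. e = bottomM M TUnit" using S R_refl[of TUnit "m_top M"] unit_dom by auto
    moreover have "R TUnit (bottomM M TUnit) (bottomM M TUnit)" by (simp add: R_refl bottomM_in)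
    ultimately have "\<forall>e\<in>S. R TUnit e (bottomM M TUnit)" by metis
    then have "R TUnit x (bottomM M TUnit)" using a bottomM_in[OF closed_ty_simps(1)] unfolding is_lub_def by blast
    then show False using x top_nle_bottom by simp
  qed
qed

lemma prod_bij:
  assumes "closed_ty (TProd t s)"
  shows "bij_betw (\<lambda>x. (m_pi1 M (TProd t s) x, m_pi2 M (TProd t s) x)) (D (TProd t s)) (D t \<times> D s)"
  using prod_axioms[rule_format, OF assms] by (rule conjunct1)

lemma pi_in:
  assumes "closed_ty (TProd t s)" "x \<in> D (TProd t s)"
  shows "m_pi1 M (TProd t s) x \<in> D t" "m_pi2 M (TProd t s) x \<in> D s"
  using prod_bij[OF assms(1)] assms(2) unfolding bij_betw_def by auto

lemma le_prod_iff:
  assumes "closed_ty (TProd t s)" "x \<in> D (TProd t s)" "y \<in> D (TProd t s)"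
  shows "R (TProd t s) x y \<longleftrightarrow>
    R t (m_pi1 M (TProd t s) x) (m_pi1 M (TProd t s) y) \<and> R s (m_pi2 M (TProd t s) x) (m_pi2 M (TProd t s) y)"
  using prod_axioms[rule_format, OF assms(1), THEN conjunct2] assms(2,3) by blast

lemma pairM:
  assumes c: "closed_ty (TProd t s)" and a: "a \<in> D t" and b: "b \<in> D s"
  shows "pairM M (TProd t s) a b \<in> D (TProd t s)" "m_pi1 M (TProd t s) (pairM M (TProd t s) a b) = a"
    "m_pi2 M (TProd t s) (pairM M (TProd t s) a b) = b"
proof -
  let ?T = "TProd t s"
  have bij: "bij_betw (\<lambda>x. (m_pi1 M ?T x, m_pi2 M ?T x)) (D ?T) (D t \<times> D s)" by (rule prod_bij[OF c])
  then have "(a, b) \<in> (\<lambda>x. (m_pi1 M ?T x, m_pi2 M ?T x)) ` D ?T" using a b unfolding bij_betw_def by auto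
  then obtain x where x: "x \<in> D ?T" "m_pi1 M ?T x = a" "m_pi2 M ?T x = b" by auto
  have "\<exists>!x. x \<in> D ?T \<and> m_pi1 M ?T x = a \<and> m_pi2 M ?T x = b"
  proof (rule ex1I[of _ x])
    fix y assume "y \<in> D ?T \<and> m_pi1 M ?T y = a \<and> m_pi2 M ?T y = b"
    then show "y = x" using x bij unfolding bij_betw_def inj_on_def by auto
  qed (use x in auto)
  from theI'[OF this] show "pairM M ?T a b \<in> D ?T" "m_pi1 M ?T (pairM M ?T a b) = a"
    "m_pi2 M ?T (pairM M ?T a b) = b"
    unfolding pairM_def by blast+
qed

lemma pairM_eta:
  assumes c: "closed_ty (TProd t s)" and x: "x \<in> D (TProd t s)"
  shows "pairM M (TProd t s) (m_pi1 M (TProd t s) x) (m_pi2 M (TProd t s) x) = x"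
  unfolding pairM_def
  by (rule the_equality) (use x prod_bij[OF c] in \<open>auto simp: bij_betw_def inj_on_def\<close>)

lemma prod_is_lubI:
  assumes c: "closed_ty (TProd t s)" and S: "S \<subseteq> D (TProd t s)" and p: "p \<in> D (TProd t s)"
    and l1: "is_lub (D t) (R t) (m_pi1 M (TProd t s) ` S) (m_pi1 M (TProd t s) p)"
    and l2: "is_lub (D s) (R s) (m_pi2 M (TProd t s) ` S) (m_pi2 M (TProd t s) p)"
  shows "is_lub (D (TProd t s)) (R (TProd t s)) S p"
  unfolding is_lub_def
proof (intro conjI ballI impI)
  show "p \<in> D (TProd t s)" by (rule p)
  show "R (TProd t s) y p" if "y \<in> S" for y
    using that S l1 l2 le_prod_iff[OF c _ p] unfolding is_lub_def by blast
  show "R (TProd t s) p z" if z: "z \<in> D (TProd t s)" "\<forall>y\<in>S. R (TProd t s) y z" for z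
  proof -
    have "\<forall>y\<in>S. R t (m_pi1 M (TProd t s) y) (m_pi1 M (TProd t s) z) \<and>
      R s (m_pi2 M (TProd t s) y) (m_pi2 M (TProd t s) z)"
      using z S le_prod_iff[OF c] by blast
    then show ?thesis using l1 l2 pi_in[OF c z(1)] le_prod_iff[OF c p z(1)] unfolding is_lub_def by blast
  qed
qed

lemma pi_cont:
  assumes c: "closed_ty (TProd t s)"
  shows "scott_cont (D (TProd t s)) (R (TProd t s)) (D t) (R t) (m_pi1 M (TProd t s))"
    "scott_cont (D (TProd t s)) (R (TProd t s)) (D s) (R s) (m_pi2 M (TProd t s))"
proof -
  let ?T = "TProd t s" and ?p1 = "m_pi1 M (TProd t s)" and ?p2 = "m_pi2 M (TProd t s)"
  have cs: "closed_ty t" "closed_ty s" using c by auto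
  have lubs: "is_lub (D t) (R t) (?p1 ` S) (?p1 x) \<and> is_lub (D s) (R s) (?p2 ` S) (?p2 x)"
    if dir: "directed_in (D ?T) (R ?T) S" and lub: "is_lub (D ?T) (R ?T) S x" for S x
  proof -
    have SD: "S \<subseteq> D ?T" using dir unfolding directed_in_def by auto
    have "directed_in (D t) (R t) (?p1 ` S)" "directed_in (D s) (R s) (?p2 ` S)"
      by (rule directed_in_image[OF dir]; use pi_in[OF c] le_prod_iff[OF c] in auto)+
    then obtain l1 l2 where l1: "is_lub (D t) (R t) (?p1 ` S) l1" and l2: "is_lub (D s) (R s) (?p2 ` S) l2"
      using lub_exists cs by blast
    let ?l = "pairM M ?T l1 l2"
    have l: "?l \<in> D ?T" "?p1 ?l = l1" "?p2 ?l = l2" using pairM[OF c is_lub_in[OF l1] is_lub_in[OF l2]] by auto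
    have "is_lub (D ?T) (R ?T) S ?l" using prod_is_lubI[OF c SD l(1)] l l1 l2 by simp
    then have "x = ?l" using is_lub_unique[OF po_on_dom[OF c] lub] by blast
    then show ?thesis using l l1 l2 by simp
  qed
  show "scott_cont (D ?T) (R ?T) (D t) (R t) ?p1" "scott_cont (D ?T) (R ?T) (D s) (R s) ?p2"
    unfolding scott_cont_def using lubs pi_in[OF c] le_prod_iff[OF c] by blast+
qed

lemma upset_pairM:
  assumes c: "closed_ty (TProd t s)" and "c1 \<in> D t" "c2 \<in> D s"
  shows "upset M (TProd t s) (pairM M (TProd t s) c1 c2) =
    {x \<in> D (TProd t s). m_pi1 M (TProd t s) x \<in> upset M t c1 \<and> m_pi2 M (TProd t s) x \<in> upset M s c2}"
  unfolding upset_def using pairM[OF assms] le_prod_iff[OF c] pi_in[OF c] by auto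

lemma compact_pairM:
  assumes c: "closed_ty (TProd t s)"
    and c1: "compact_el (D t) (R t) c1" and c2: "compact_el (D s) (R s) c2"
  shows "compact_el (D (TProd t s)) (R (TProd t s)) (pairM M (TProd t s) c1 c2)"
proof (rule compact_el_preimage_upsets[OF pi_cont[OF c] po_on_dom po_on_dom c1 c2])
  have "c1 \<in> D t" "c2 \<in> D s" using c1 c2 unfolding compact_el_def by auto
  then show "pairM M (TProd t s) c1 c2 \<in> D (TProd t s)"
    "\<forall>y\<in>D (TProd t s). R (TProd t s) (pairM M (TProd t s) c1 c2) y \<longleftrightarrow>
       R t c1 (m_pi1 M (TProd t s) y) \<and> R s c2 (m_pi2 M (TProd t s) y)"
    using pairM[OF c] le_prod_iff[OF c] by auto
qed (use c in auto)

lemma fun_axioms_inst: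
  assumes "closed_ty (TFun s t)"
  shows "\<forall>f\<in>D (TFun s t). scott_cont (D s) (R s) (D t) (R t) (m_app M (TFun s t) f)"
    "\<forall>g. scott_cont (D s) (R s) (D t) (R t) g \<longrightarrow> (\<exists>f\<in>D (TFun s t). \<forall>x\<in>D s. m_app M (TFun s t) f x = g x)"
    "\<forall>f\<in>D (TFun s t). \<forall>g\<in>D (TFun s t). R (TFun s t) f g \<longleftrightarrow>
       (\<forall>x\<in>D s. R t (m_app M (TFun s t) f x) (m_app M (TFun s t) g x))"
  using fun_axioms[rule_format, OF assms] by (rule conjunct1, rule conjunct1[OF conjunct2], rule conjunct2[OF conjunct2])

lemma app_cont:
  "closed_ty (TFun s t) \<Longrightarrow> f \<in> D (TFun s t) \<Longrightarrow> scott_cont (D s) (R s) (D t) (R t) (m_app M (TFun s t) f)"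
  using fun_axioms_inst(1) by blast

lemma app_in: "closed_ty (TFun s t) \<Longrightarrow> f \<in> D (TFun s t) \<Longrightarrow> x \<in> D s \<Longrightarrow> m_app M (TFun s t) f x \<in> D t"
  by (rule scott_cont_in[OF app_cont])

lemma app_mono:
  "closed_ty (TFun s t) \<Longrightarrow> f \<in> D (TFun s t) \<Longrightarrow> x \<in> D s \<Longrightarrow> y \<in> D s \<Longrightarrow> R s x y \<Longrightarrow>
   R t (m_app M (TFun s t) f x) (m_app M (TFun s t) f y)"
  by (rule scott_cont_mono[OF app_cont])

lemma le_fun_iff:
  "closed_ty (TFun s t) \<Longrightarrow> f \<in> D (TFun s t) \<Longrightarrow> g \<in> D (TFun s t) \<Longrightarrow>
   R (TFun s t) f g \<longleftrightarrow> (\<forall>x\<in>D s. R t (m_app M (TFun s t) f x) (m_app M (TFun s t) g x))"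
  using fun_axioms_inst(3) by blast

lemma fun_ext:
  "closed_ty (TFun s t) \<Longrightarrow> f \<in> D (TFun s t) \<Longrightarrow> g \<in> D (TFun s t) \<Longrightarrow>
   \<forall>x\<in>D s. m_app M (TFun s t) f x = m_app M (TFun s t) g x \<Longrightarrow> f = g"
  by (rule R_antisym[of "TFun s t"]) (auto simp: le_fun_iff intro!: R_refl app_in)

lemma lamM:
  assumes c: "closed_ty (TFun s t)" and g: "scott_cont (D s) (R s) (D t) (R t) g"
  shows "lamM M s (TFun s t) g \<in> D (TFun s t)" "\<forall>x\<in>D s. m_app M (TFun s t) (lamM M s (TFun s t) g) x = g x"
proof -
  obtain f where f: "f \<in> D (TFun s t)" "\<forall>x\<in>D s. m_app M (TFun s t) f x = g x"
    using fun_axioms_inst(2)[OF c] g by blast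
  have "\<exists>!f. f \<in> D (TFun s t) \<and> (\<forall>x\<in>D s. m_app M (TFun s t) f x = g x)"
  proof (rule ex1I[of _ f])
    fix f' assume "f' \<in> D (TFun s t) \<and> (\<forall>x\<in>D s. m_app M (TFun s t) f' x = g x)"
    then show "f' = f" using f by (intro fun_ext[OF c]) auto
  qed (use f in auto)
  from theI'[OF this] show "lamM M s (TFun s t) g \<in> D (TFun s t)"
    "\<forall>x\<in>D s. m_app M (TFun s t) (lamM M s (TFun s t) g) x = g x"
    unfolding lamM_def by blast+
qed

lemma fun_is_lubI:
  assumes c: "closed_ty (TFun s t)" and F: "F \<subseteq> D (TFun s t)" and h: "h \<in> D (TFun s t)"
    and l: "\<forall>x\<in>D s. is_lub (D t) (R t) ((\<lambda>f. m_app M (TFun s t) f x) ` F) (m_app M (TFun s t) h x)"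
  shows "is_lub (D (TFun s t)) (R (TFun s t)) F h"
  unfolding is_lub_def
proof (intro conjI ballI impI)
  show "h \<in> D (TFun s t)" by (rule h)
  show "R (TFun s t) f h" if "f \<in> F" for f
    using that F l le_fun_iff[OF c _ h] unfolding is_lub_def by blast
  show "R (TFun s t) h z" if z: "z \<in> D (TFun s t)" "\<forall>f\<in>F. R (TFun s t) f z" for z
  proof -
    have "\<forall>x\<in>D s. \<forall>f\<in>F. R t (m_app M (TFun s t) f x) (m_app M (TFun s t) z x)"
      using z F le_fun_iff[OF c] by blast
    then show ?thesis using l app_in[OF c z(1)] le_fun_iff[OF c h z(1)] unfolding is_lub_def by blast
  qed
qed

lemma fun_lub:
  assumes c: "closed_ty (TFun s t)" and dir: "directed_in (D (TFun s t)) (R (TFun s t)) F"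
    and lub: "is_lub (D (TFun s t)) (R (TFun s t)) F h" and x: "x \<in> D s"
  shows "is_lub (D t) (R t) ((\<lambda>f. m_app M (TFun s t) f x) ` F) (m_app M (TFun s t) h x)"
proof -
  let ?T = "TFun s t" and ?ap = "m_app M (TFun s t)"
  have cs: "closed_ty s" "closed_ty t" using c by auto
  have FD: "F \<subseteq> D ?T" using dir unfolding directed_in_def by auto
  have dir_at: "directed_in (D t) (R t) ((\<lambda>f. ?ap f y) ` F)" if "y \<in> D s" for y
    by (rule directed_in_image[OF dir]) (use app_in[OF c _ that] le_fun_iff[OF c] that in auto)
  define k where "k y = lubM M t ((\<lambda>f. ?ap f y) ` F)" for y
  have k_lub: "is_lub (D t) (R t) ((\<lambda>f. ?ap f y) ` F) (k y)" if "y \<in> D s" for y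
    unfolding k_def by (rule lubM_is_lub[OF cs(2) dir_at[OF that]])
  have "scott_cont (D s) (R s) (D t) (R t) k"
    by (rule scott_cont_pointwise_lub[where I=F and p="?ap", OF _ _ po_on_dom[OF cs(2)]])
      (use app_cont[OF c] FD k_lub in auto)
  then obtain h' where h': "h' \<in> D ?T" "\<forall>y\<in>D s. ?ap h' y = k y" using lamM[OF c] by blast
  have "is_lub (D ?T) (R ?T) F h'" using fun_is_lubI[OF c FD h'(1)] k_lub h'(2) by simp
  then have "h = h'" using is_lub_unique[OF po_on_dom[OF c] lub] by blast
  then show ?thesis using k_lub[OF x] h' x by simp
qed

abbreviation sum_inj :: "bool \<Rightarrow> ty \<Rightarrow> 'u \<Rightarrow> 'u" where
  "sum_inj k T \<equiv> pick k (m_inj1 M T) (m_inj2 M T)"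

lemma sum_axioms_inst:
  assumes "closed_ty (TSum t s)"
  shows "\<exists>b. b \<notin> m_inj1 M (TSum t s) ` D t \<union> m_inj2 M (TSum t s) ` D s
       \<and> D (TSum t s) = insert b (m_inj1 M (TSum t s) ` D t \<union> m_inj2 M (TSum t s) ` D s)
       \<and> (\<forall>x\<in>D (TSum t s). R (TSum t s) b x)
       \<and> (\<forall>x\<in>D t. \<not> R (TSum t s) (m_inj1 M (TSum t s) x) b)
       \<and> (\<forall>y\<in>D s. \<not> R (TSum t s) (m_inj2 M (TSum t s) y) b)"
    "\<forall>x\<in>D t. \<forall>y\<in>D t. R (TSum t s) (m_inj1 M (TSum t s) x) (m_inj1 M (TSum t s) y) \<longleftrightarrow> R t x y"
    "\<forall>x\<in>D s. \<forall>y\<in>D s. R (TSum t s) (m_inj2 M (TSum t s) x) (m_inj2 M (TSum t s) y) \<longleftrightarrow> R s x y"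
    "\<forall>x\<in>D t. \<forall>y\<in>D s. \<not> R (TSum t s) (m_inj1 M (TSum t s) x) (m_inj2 M (TSum t s) y)
       \<and> \<not> R (TSum t s) (m_inj2 M (TSum t s) y) (m_inj1 M (TSum t s) x)"
  using sum_axioms[rule_format, OF assms] by - (elim conjE; assumption)+

lemma sum_dom:
  assumes c: "closed_ty (TSum t s)"
  shows "D (TSum t s) = insert (bottomM M (TSum t s)) (m_inj1 M (TSum t s) ` D t \<union> m_inj2 M (TSum t s) ` D s)"
    "\<forall>x\<in>D t. \<not> R (TSum t s) (m_inj1 M (TSum t s) x) (bottomM M (TSum t s))"
    "\<forall>y\<in>D s. \<not> R (TSum t s) (m_inj2 M (TSum t s) y) (bottomM M (TSum t s))"
proof -
  obtain b where b: "D (TSum t s) = insert b (m_inj1 M (TSum t s) ` D t \<union> m_inj2 M (TSum t s) ` D s)"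
    "\<forall>x\<in>D (TSum t s). R (TSum t s) b x"
    "\<forall>x\<in>D t. \<not> R (TSum t s) (m_inj1 M (TSum t s) x) b" "\<forall>y\<in>D s. \<not> R (TSum t s) (m_inj2 M (TSum t s) y) b"
    using sum_axioms_inst(1)[OF c] by blast
  have "bottomM M (TSum t s) = b" using bottomM_eqI[OF c _ b(2)] b(1) by simp
  then show "D (TSum t s) = insert (bottomM M (TSum t s)) (m_inj1 M (TSum t s) ` D t \<union> m_inj2 M (TSum t s) ` D s)"
    "\<forall>x\<in>D t. \<not> R (TSum t s) (m_inj1 M (TSum t s) x) (bottomM M (TSum t s))"
    "\<forall>y\<in>D s. \<not> R (TSum t s) (m_inj2 M (TSum t s) y) (bottomM M (TSum t s))"
    using b by simp_all
qed

definition inj_preimage :: "bool \<Rightarrow> ty \<Rightarrow> ty \<Rightarrow> 'u set \<Rightarrow> 'u set" where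
  "inj_preimage k t s S = {y \<in> D (pick k t s). sum_inj k (TSum t s) y \<in> S}"

context
  fixes t s
  assumes c: "closed_ty (TSum t s)"
begin

lemma sum_inj_in: "x \<in> D (pick k t s) \<Longrightarrow> sum_inj k (TSum t s) x \<in> D (TSum t s)"
  using sum_dom(1)[OF c] by (cases k) auto

lemma sum_cases:
  assumes "y \<in> D (TSum t s)"
  obtains "y = bottomM M (TSum t s)" | k x where "x \<in> D (pick k t s)" "y = sum_inj k (TSum t s) x"
proof -
  have "y = bottomM M (TSum t s) \<or> (\<exists>x\<in>D t. y = m_inj1 M (TSum t s) x) \<or> (\<exists>x\<in>D s. y = m_inj2 M (TSum t s) x)"
    using assms sum_dom(1)[OF c] by auto
  then show ?thesis using that(1) that(2)[of _ True] that(2)[of _ False] by auto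
qed

lemma sum_inj_le_iff:
  "x \<in> D (pick k t s) \<Longrightarrow> y \<in> D (pick k t s) \<Longrightarrow>
   R (TSum t s) (sum_inj k (TSum t s) x) (sum_inj k (TSum t s) y) \<longleftrightarrow> R (pick k t s) x y"
  using sum_axioms_inst(2,3)[OF c] by (cases k) auto

lemma sum_inj_nle_inj:
  "k \<noteq> k' \<Longrightarrow> x \<in> D (pick k t s) \<Longrightarrow> y \<in> D (pick k' t s) \<Longrightarrow>
   \<not> R (TSum t s) (sum_inj k (TSum t s) x) (sum_inj k' (TSum t s) y)"
  using sum_axioms_inst(4)[OF c] by (cases k; cases k') auto

lemma sum_inj_nle_bottom:
  "x \<in> D (pick k t s) \<Longrightarrow> \<not> R (TSum t s) (sum_inj k (TSum t s) x) (bottomM M (TSum t s))"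
  using sum_dom(2,3)[OF c] by (cases k) auto

lemma sum_inj_ne_bottom: "x \<in> D (pick k t s) \<Longrightarrow> sum_inj k (TSum t s) x \<noteq> bottomM M (TSum t s)"
  using sum_inj_nle_bottom R_refl[OF c sum_inj_in] by metis

lemma sum_inj_eq_iff:
  assumes "x \<in> D (pick k t s)" "y \<in> D (pick k' t s)"
  shows "sum_inj k (TSum t s) x = sum_inj k' (TSum t s) y \<longleftrightarrow> k = k' \<and> x = y"
proof
  assume eq: "sum_inj k (TSum t s) x = sum_inj k' (TSum t s) y"
  then have "R (TSum t s) (sum_inj k (TSum t s) x) (sum_inj k' (TSum t s) y)"
    using R_refl[OF c sum_inj_in[OF assms(2)]] by simp
  then have k: "k = k'" using sum_inj_nle_inj assms by blast
  have y: "y \<in> D (pick k t s)" using assms(2) k by simp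
  have "R (TSum t s) (sum_inj k (TSum t s) x) (sum_inj k (TSum t s) y)"
    "R (TSum t s) (sum_inj k (TSum t s) y) (sum_inj k (TSum t s) x)"
    using R_refl[OF c sum_inj_in[OF y]] eq k by simp_all
  then have "R (pick k t s) x y" "R (pick k t s) y x"
    using sum_inj_le_iff[OF assms(1) y] sum_inj_le_iff[OF y assms(1)] by simp_all
  moreover have "closed_ty (pick k t s)" using c by (cases k) auto
  ultimately show "k = k' \<and> x = y" using R_antisym assms(1) y k by blast
qed simp

lemma above_sum_inj:
  assumes x: "x \<in> D (pick k t s)" and y: "y \<in> D (TSum t s)"
    and le: "R (TSum t s) (sum_inj k (TSum t s) x) y"
  shows "\<exists>y'\<in>D (pick k t s). y = sum_inj k (TSum t s) y' \<and> R (pick k t s) x y'"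
  using y
proof (cases rule: sum_cases)
  case 1 then show ?thesis using sum_inj_nle_bottom[OF x] le by simp
next
  case (2 k' y')
  then show ?thesis using sum_inj_nle_inj[OF _ x] sum_inj_le_iff[OF x] le by (cases "k = k'") auto
qed

lemma closed_summand: "closed_ty (pick k t s)"
  using c by (cases k) auto

lemma sum_lub_bottom:
  assumes dir: "directed_in (D (TSum t s)) (R (TSum t s)) S"
    and lub: "is_lub (D (TSum t s)) (R (TSum t s)) S (bottomM M (TSum t s))"
  shows "S = {bottomM M (TSum t s)}"
proof -
  have "z = bottomM M (TSum t s)" if "z \<in> S" for z
  proof (rule R_antisym[OF c])
    show "z \<in> D (TSum t s)" using that dir unfolding directed_in_def by auto
    then show "R (TSum t s) (bottomM M (TSum t s)) z" by (rule bottomM_least[OF c])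
    show "R (TSum t s) z (bottomM M (TSum t s))" using lub that unfolding is_lub_def by auto
  qed (rule bottomM_in[OF c])
  moreover have "S \<noteq> {}" using dir unfolding directed_in_def by auto
  ultimately show ?thesis by auto
qed

lemma sum_lub_inj_cover:
  assumes dir: "directed_in (D (TSum t s)) (R (TSum t s)) S"
    and x: "x \<in> D (pick k t s)" and lub: "is_lub (D (TSum t s)) (R (TSum t s)) S (sum_inj k (TSum t s) x)"
  shows "S \<subseteq> insert (bottomM M (TSum t s)) (sum_inj k (TSum t s) ` inj_preimage k t s S)"
proof
  fix z assume z: "z \<in> S"
  then have "z \<in> D (TSum t s)" using dir unfolding directed_in_def by auto
  then show "z \<in> insert (bottomM M (TSum t s)) (sum_inj k (TSum t s) ` inj_preimage k t s S)"
  proof (cases rule: sum_cases)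
    case (2 k' y)
    have "R (TSum t s) z (sum_inj k (TSum t s) x)" using lub z unfolding is_lub_def by blast
    then have "k' = k" using 2 sum_inj_nle_inj[OF _ _ x] by blast
    then show ?thesis using 2 z unfolding inj_preimage_def by auto
  qed simp
qed

lemma sum_lub_inj_directed:
  assumes dir: "directed_in (D (TSum t s)) (R (TSum t s)) S"
    and x: "x \<in> D (pick k t s)" and lub: "is_lub (D (TSum t s)) (R (TSum t s)) S (sum_inj k (TSum t s) x)"
  shows "directed_in (D (pick k t s)) (R (pick k t s)) (inj_preimage k t s S)"
proof -
  let ?T = "TSum t s" and ?U = "pick k t s" and ?i = "sum_inj k (TSum t s)" and ?b = "bottomM M (TSum t s)"
  have "inj_preimage k t s S \<noteq> {}"
  proof
    assume "inj_preimage k t s S = {}"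
    then have "\<forall>z\<in>S. R ?T z ?b"
      using sum_lub_inj_cover[OF dir x lub] R_refl[OF c bottomM_in[OF c]] by auto
    then have "R ?T (?i x) ?b" using lub bottomM_in[OF c] unfolding is_lub_def by blast
    then show False using sum_inj_nle_bottom[OF x] by simp
  qed
  moreover have "\<exists>z\<in>inj_preimage k t s S. R ?U y1 z \<and> R ?U y2 z"
    if y: "y1 \<in> inj_preimage k t s S" "y2 \<in> inj_preimage k t s S" for y1 y2
  proof -
    obtain z where z: "z \<in> S" "R ?T (?i y1) z" "R ?T (?i y2) z"
      using dir y unfolding directed_in_def inj_preimage_def by blast
    then have "z \<in> D ?T" using dir unfolding directed_in_def by auto
    then obtain z' where z': "z' \<in> D ?U" "z = ?i z'" "R ?U y1 z'"
      using above_sum_inj z(2) y unfolding inj_preimage_def by blast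
    have "R ?U y2 z'" using z(3) z' sum_inj_le_iff y unfolding inj_preimage_def by auto
    then show ?thesis using z z' unfolding inj_preimage_def by auto
  qed
  ultimately show ?thesis unfolding directed_in_def inj_preimage_def by auto
qed

lemma sum_lub_inj_is_lub:
  assumes dir: "directed_in (D (TSum t s)) (R (TSum t s)) S"
    and x: "x \<in> D (pick k t s)" and lub: "is_lub (D (TSum t s)) (R (TSum t s)) S (sum_inj k (TSum t s) x)"
  shows "is_lub (D (pick k t s)) (R (pick k t s)) (inj_preimage k t s S) x"
  unfolding is_lub_def
proof (intro conjI ballI impI)
  let ?T = "TSum t s" and ?U = "pick k t s" and ?i = "sum_inj k (TSum t s)"
  show "x \<in> D ?U" by (rule x)
  show "R ?U y x" if "y \<in> inj_preimage k t s S" for y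
    using that lub sum_inj_le_iff[OF _ x] unfolding is_lub_def inj_preimage_def by auto
  fix z assume z: "z \<in> D ?U" "\<forall>y\<in>inj_preimage k t s S. R ?U y z"
  have "R ?T w (?i z)" if "w \<in> S" for w
  proof -
    from sum_lub_inj_cover[OF dir x lub] that
    have "w = bottomM M ?T \<or> w \<in> ?i ` inj_preimage k t s S" by blast
    then show ?thesis
    proof
      assume "w = bottomM M ?T"
      then show ?thesis using bottomM_least[OF c sum_inj_in[OF z(1)]] by simp
    next
      assume "w \<in> ?i ` inj_preimage k t s S"
      then show ?thesis using z sum_inj_le_iff[OF _ z(1)] unfolding inj_preimage_def by auto
    qed
  qed
  then have "R ?T (?i x) (?i z)" using lub sum_inj_in[OF z(1)] unfolding is_lub_def by blast
  then show "R ?U x z" using sum_inj_le_iff[OF x z(1)] by simp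
qed

lemma upset_sum_inj:
  assumes x: "x \<in> D (pick k t s)"
  shows "upset M (TSum t s) (sum_inj k (TSum t s) x) = sum_inj k (TSum t s) ` upset M (pick k t s) x"
  using above_sum_inj[OF x] sum_inj_le_iff[OF x] sum_inj_in unfolding upset_def by fastforce

lemma compact_sum_inj:
  assumes x: "compact_el (D (pick k t s)) (R (pick k t s)) x"
  shows "compact_el (D (TSum t s)) (R (TSum t s)) (sum_inj k (TSum t s) x)"
  unfolding compact_el_def
proof (intro conjI allI impI)
  have xD: "x \<in> D (pick k t s)" using x unfolding compact_el_def by auto
  then show "sum_inj k (TSum t s) x \<in> D (TSum t s)" by (rule sum_inj_in)
  fix S y assume a: "directed_in (D (TSum t s)) (R (TSum t s)) S \<and> is_lub (D (TSum t s)) (R (TSum t s)) S y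
     \<and> R (TSum t s) (sum_inj k (TSum t s) x) y"
  have yD: "y \<in> D (TSum t s)" using a unfolding is_lub_def by auto
  obtain y' where y': "y' \<in> D (pick k t s)" "y = sum_inj k (TSum t s) y'" "R (pick k t s) x y'"
    using above_sum_inj[OF xD yD] a by auto
  have "directed_in (D (pick k t s)) (R (pick k t s)) (inj_preimage k t s S)"
    "is_lub (D (pick k t s)) (R (pick k t s)) (inj_preimage k t s S) y'"
    using sum_lub_inj_directed[OF _ y'(1)] sum_lub_inj_is_lub[OF _ y'(1)] a y'(2) by auto
  then obtain z where "z \<in> D (pick k t s)" "sum_inj k (TSum t s) z \<in> S" "R (pick k t s) x z"
    using x y'(3) unfolding compact_el_def inj_preimage_def by blast
  then show "\<exists>e\<in>S. R (TSum t s) (sum_inj k (TSum t s) x) e" using sum_inj_le_iff[OF xD] by auto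
qed

end

lemma mu_axioms_inst:
  assumes "closed_ty (TMu a t)"
  shows "bij_betw (m_unfold M (TMu a t)) (D (TMu a t)) (D (subst t a (TMu a t)))"
    "\<forall>x\<in>D (TMu a t). m_fold M (TMu a t) (m_unfold M (TMu a t) x) = x"
    "\<forall>y\<in>D (subst t a (TMu a t)). m_unfold M (TMu a t) (m_fold M (TMu a t) y) = y"
    "\<forall>x\<in>D (TMu a t). \<forall>y\<in>D (TMu a t). R (TMu a t) x y \<longleftrightarrow>
        R (subst t a (TMu a t)) (m_unfold M (TMu a t) x) (m_unfold M (TMu a t) y)"
    "\<forall>x\<in>D (TMu a t). act M (\<lambda>_. (TUnit, id)) (TMu a t) x = x"
  using mu_axioms[rule_format, OF assms] by - (elim conjE; assumption)+

context
  fixes a t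
  assumes c: "closed_ty (TMu a t)"
begin

lemma unfold_in: "x \<in> D (TMu a t) \<Longrightarrow> m_unfold M (TMu a t) x \<in> D (subst t a (TMu a t))"
  using mu_axioms_inst(1)[OF c] unfolding bij_betw_def by blast

lemma fold_unfold: "x \<in> D (TMu a t) \<Longrightarrow> m_fold M (TMu a t) (m_unfold M (TMu a t) x) = x"
  using mu_axioms_inst(2)[OF c] by blast

lemma unfold_fold: "y \<in> D (subst t a (TMu a t)) \<Longrightarrow> m_unfold M (TMu a t) (m_fold M (TMu a t) y) = y"
  using mu_axioms_inst(3)[OF c] by blast

lemma fold_in: "y \<in> D (subst t a (TMu a t)) \<Longrightarrow> m_fold M (TMu a t) y \<in> D (TMu a t)"
  using mu_axioms_inst(1)[OF c] fold_unfold unfolding bij_betw_def by (metis imageE)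

lemma le_unfold_iff:
  "x \<in> D (TMu a t) \<Longrightarrow> y \<in> D (TMu a t) \<Longrightarrow>
   R (TMu a t) x y \<longleftrightarrow> R (subst t a (TMu a t)) (m_unfold M (TMu a t) x) (m_unfold M (TMu a t) y)"
  using mu_axioms_inst(4)[OF c] by blast

lemma le_fold_iff:
  "x \<in> D (subst t a (TMu a t)) \<Longrightarrow> y \<in> D (subst t a (TMu a t)) \<Longrightarrow>
   R (TMu a t) (m_fold M (TMu a t) x) (m_fold M (TMu a t) y) \<longleftrightarrow> R (subst t a (TMu a t)) x y"
  using le_unfold_iff[OF fold_in fold_in] unfold_fold by simp

lemma unfold_cont:
  "scott_cont (D (TMu a t)) (R (TMu a t)) (D (subst t a (TMu a t))) (R (subst t a (TMu a t)))
     (m_unfold M (TMu a t))"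
  by (rule scott_cont_order_iso[where g="m_fold M (TMu a t)"])
    (use unfold_in fold_in unfold_fold le_unfold_iff in auto)

lemma fold_cont:
  "scott_cont (D (subst t a (TMu a t))) (R (subst t a (TMu a t))) (D (TMu a t)) (R (TMu a t))
     (m_fold M (TMu a t))"
  by (rule scott_cont_order_iso[where g="m_unfold M (TMu a t)"])
    (use unfold_in fold_in fold_unfold le_fold_iff in auto)

lemma upset_fold:
  "y \<in> D (subst t a (TMu a t)) \<Longrightarrow> upset M (TMu a t) (m_fold M (TMu a t) y) =
     {x \<in> D (TMu a t). m_unfold M (TMu a t) x \<in> upset M (subst t a (TMu a t)) y}"
  unfolding upset_def using le_unfold_iff[OF fold_in] unfold_fold unfold_in by auto

lemma compact_fold:
  assumes y: "compact_el (D (subst t a (TMu a t))) (R (subst t a (TMu a t))) y"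
  shows "compact_el (D (TMu a t)) (R (TMu a t)) (m_fold M (TMu a t) y)"
proof (rule compact_el_preimage_upsets[OF unfold_cont unfold_cont _ _ y y])
  have "y \<in> D (subst t a (TMu a t))" using y unfolding compact_el_def by auto
  then show "m_fold M (TMu a t) y \<in> D (TMu a t)"
    "\<forall>x\<in>D (TMu a t). R (TMu a t) (m_fold M (TMu a t) y) x \<longleftrightarrow>
       R (subst t a (TMu a t)) y (m_unfold M (TMu a t) x) \<and> R (subst t a (TMu a t)) y (m_unfold M (TMu a t) x)"
    using fold_in le_unfold_iff[OF fold_in] unfold_fold by auto
qed (use po_on_dom[OF closed_ty_unfold[OF c]] in auto)

end

section \<open>Formulas denote empty or compact principal upsets\<close>

definition principal_or_empty :: "ty \<Rightarrow> 'u set \<Rightarrow> bool" where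
  "principal_or_empty T X \<longleftrightarrow> X = {} \<or> (\<exists>d. compact_el (D T) (R T) d \<and> X = upset M T d)"

definition sem_conj :: "ty \<Rightarrow> form list \<Rightarrow> 'u set" where
  "sem_conj T \<Delta> = D T \<inter> (\<Inter>\<delta>\<in>set \<Delta>. sem M T \<delta>)"

lemma sem_subset: "closed_ty T \<Longrightarrow> wf_form T \<delta> \<Longrightarrow> sem M T \<delta> \<subseteq> D T"
proof (induction \<delta> arbitrary: T)
  case FUnit then show ?case using unit_dom by simp
next
  case (FInj1 p)
  then obtain t1 t2 where T: "T = TSum t1 t2" by (cases T) auto
  then show ?case using FInj1 sum_inj_in[of t1 t2 _ True] by auto
next
  case (FInj2 p)
  then obtain t1 t2 where T: "T = TSum t1 t2" by (cases T) auto
  then show ?case using FInj2 sum_inj_in[of t1 t2 _ False] by auto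
next
  case (FPi1 p) then show ?case by (cases T) auto
next
  case (FPi2 p) then show ?case by (cases T) auto
next
  case (FFold p) then show ?case by (cases T) auto
next
  case (FImp q p) then show ?case by (cases T) auto
qed auto

lemma sem_conj_single: "closed_ty T \<Longrightarrow> wf_form T \<delta> \<Longrightarrow> sem_conj T [\<delta>] = sem M T \<delta>"
  unfolding sem_conj_def using sem_subset by auto

lemma principal_or_empty_up_closed:
  "principal_or_empty T X \<Longrightarrow> closed_ty T \<Longrightarrow> x \<in> X \<Longrightarrow> y \<in> D T \<Longrightarrow> R T x y \<Longrightarrow> y \<in> X"
  unfolding principal_or_empty_def compact_el_def using upset_up_closed by blast

lemma principal_or_empty_pi:
  assumes c: "closed_ty (TProd t1 t2)"
    and X1: "principal_or_empty t1 X1" and X2: "principal_or_empty t2 X2"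
  shows "principal_or_empty (TProd t1 t2)
    {x \<in> D (TProd t1 t2). m_pi1 M (TProd t1 t2) x \<in> X1 \<and> m_pi2 M (TProd t1 t2) x \<in> X2}"
proof (cases "X1 = {} \<or> X2 = {}")
  case False
  then obtain c1 c2 where c1: "compact_el (D t1) (R t1) c1" "X1 = upset M t1 c1"
    and c2: "compact_el (D t2) (R t2) c2" "X2 = upset M t2 c2"
    using X1 X2 unfolding principal_or_empty_def by blast
  have "c1 \<in> D t1" "c2 \<in> D t2" using c1 c2 unfolding compact_el_def by auto
  then have "{x \<in> D (TProd t1 t2). m_pi1 M (TProd t1 t2) x \<in> X1 \<and> m_pi2 M (TProd t1 t2) x \<in> X2}
      = upset M (TProd t1 t2) (pairM M (TProd t1 t2) c1 c2)"
    using upset_pairM[OF c] c1(2) c2(2) by simp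
  then show ?thesis using compact_pairM[OF c c1(1) c2(1)] unfolding principal_or_empty_def by blast
qed (auto simp: principal_or_empty_def)

lemma principal_or_empty_sum_inj:
  assumes c: "closed_ty (TSum t1 t2)" and X: "principal_or_empty (pick k t1 t2) X"
  shows "principal_or_empty (TSum t1 t2) (sum_inj k (TSum t1 t2) ` X)"
proof (cases "X = {}")
  case False
  then obtain d where d: "compact_el (D (pick k t1 t2)) (R (pick k t1 t2)) d" "X = upset M (pick k t1 t2) d"
    using X unfolding principal_or_empty_def by blast
  then have "sum_inj k (TSum t1 t2) ` X = upset M (TSum t1 t2) (sum_inj k (TSum t1 t2) d)"
    using upset_sum_inj[OF c] unfolding compact_el_def by simp
  then show ?thesis using compact_sum_inj[OF c d(1)] unfolding principal_or_empty_def by blast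
qed (simp add: principal_or_empty_def)

lemma principal_or_empty_unfold:
  assumes c: "closed_ty (TMu a t)" and X: "principal_or_empty (subst t a (TMu a t)) X"
  shows "principal_or_empty (TMu a t) {x \<in> D (TMu a t). m_unfold M (TMu a t) x \<in> X}"
proof (cases "X = {}")
  case False
  then obtain d where d: "compact_el (D (subst t a (TMu a t))) (R (subst t a (TMu a t))) d"
    "X = upset M (subst t a (TMu a t)) d"
    using X unfolding principal_or_empty_def by blast
  then have "{x \<in> D (TMu a t). m_unfold M (TMu a t) x \<in> X} = upset M (TMu a t) (m_fold M (TMu a t) d)"
    using upset_fold[OF c] unfolding compact_el_def by simp
  then show ?thesis using compact_fold[OF c d(1)] unfolding principal_or_empty_def by blast
qed (simp add: principal_or_empty_def)

lemma sem_conj_prod: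
  assumes "\<forall>\<delta>\<in>set \<Delta>. (\<exists>p. \<delta> = FPi1 p) \<or> (\<exists>p. \<delta> = FPi2 p)" and c: "closed_ty (TProd t1 t2)"
  shows "sem_conj (TProd t1 t2) \<Delta> = {x \<in> D (TProd t1 t2).
    m_pi1 M (TProd t1 t2) x \<in> sem_conj t1 [p. FPi1 p \<leftarrow> \<Delta>] \<and> m_pi2 M (TProd t1 t2) x \<in> sem_conj t2 [p. FPi2 p \<leftarrow> \<Delta>]}"
  using assms(1) pi_in[OF c] unfolding sem_conj_def by fastforce

lemma sem_conj_fold:
  assumes "\<forall>\<delta>\<in>set \<Delta>. \<exists>p. \<delta> = FFold p" and c: "closed_ty (TMu a t)"
  shows "sem_conj (TMu a t) \<Delta> =
    {x \<in> D (TMu a t). m_unfold M (TMu a t) x \<in> sem_conj (subst t a (TMu a t)) [p. FFold p \<leftarrow> \<Delta>]}"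
  using assms(1) unfold_in[OF c] unfolding sem_conj_def by fastforce

lemma sem_conj_inj:
  assumes forms: "\<forall>\<delta>\<in>set \<Delta>. \<exists>p. \<delta> = FInj k p \<and> wf_form (pick k t1 t2) p" and ne: "\<Delta> \<noteq> []"
    and c: "closed_ty (TSum t1 t2)"
  shows "sem_conj (TSum t1 t2) \<Delta> = sum_inj k (TSum t1 t2) ` sem_conj (pick k t1 t2) (inj_parts k \<Delta>)"
proof -
  let ?T = "TSum t1 t2" and ?U = "pick k t1 t2" and ?i = "sum_inj k (TSum t1 t2)"
  have sem_inj: "sem M ?T (FInj k p) = ?i ` sem M ?U p" for p by (cases k) simp_all
  have "wf_form ?U p" if "FInj k p \<in> set \<Delta>" for p using forms that by (cases k) auto
  then have sub: "sem M ?U p \<subseteq> D ?U" if "p \<in> set (inj_parts k \<Delta>)" for p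
    using sem_subset[OF closed_summand[OF c]] that by simp
  obtain p0 where p0: "p0 \<in> set (inj_parts k \<Delta>)" using forms ne by (cases \<Delta>) auto
  show ?thesis
  proof (intro set_eqI iffI)
    fix x assume x: "x \<in> sem_conj ?T \<Delta>"
    have x_in: "x \<in> ?i ` sem M ?U p" if "p \<in> set (inj_parts k \<Delta>)" for p
      using x that unfolding sem_conj_def sem_inj[symmetric] by auto
    obtain y where y: "y \<in> sem M ?U p0" "x = ?i y" using x_in[OF p0] by blast
    have "y \<in> sem M ?U p" if p: "p \<in> set (inj_parts k \<Delta>)" for p
    proof -
      obtain y' where "y' \<in> sem M ?U p" "x = ?i y'" using x_in[OF p] by blast
      then show ?thesis using y sub p0 p sum_inj_eq_iff[OF c] by blast
    qed
    then show "x \<in> ?i ` sem_conj ?U (inj_parts k \<Delta>)" using y sub p0 unfolding sem_conj_def by blast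
  next
    fix x assume "x \<in> ?i ` sem_conj ?U (inj_parts k \<Delta>)"
    then show "x \<in> sem_conj ?T \<Delta>"
      using forms sem_inj sum_inj_in[OF c] unfolding sem_conj_def by fastforce
  qed
qed

definition active_concls :: "ty \<Rightarrow> form list \<Rightarrow> 'u \<Rightarrow> form list" where
  "active_concls s \<Delta> x = [p. FImp q p \<leftarrow> \<Delta>, x \<in> sem M s q]"

lemma set_active_concls: "p \<in> set (active_concls s \<Delta> x) \<longleftrightarrow> (\<exists>q. FImp q p \<in> set \<Delta> \<and> x \<in> sem M s q)"
  unfolding active_concls_def by (rule set_modal_parts(4))

context
  fixes s t \<Delta>
  assumes c: "closed_ty (TFun s t)"
    and imps: "\<forall>\<delta>\<in>set \<Delta>. \<exists>q p. \<delta> = FImp q p \<and> wf_form s q \<and> wf_form t p"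
    and premises_principal: "\<forall>q p. FImp q p \<in> set \<Delta> \<longrightarrow> principal_or_empty s (sem M s q)"
    and concls_principal: "\<forall>q p. FImp q p \<in> set \<Delta> \<longrightarrow> principal_or_empty t (sem M t p)"
begin

lemma closed_dom_cod: "closed_ty s" "closed_ty t"
  using c by auto

lemma imp_wf: "FImp q p \<in> set \<Delta> \<Longrightarrow> wf_form s q \<and> wf_form t p"
  using imps by fastforce

lemma imps_cases:
  assumes "\<delta> \<in> set \<Delta>"
  obtains q p where "\<delta> = FImp q p" "FImp q p \<in> set \<Delta>"
  using imps assms by fastforce

lemma premise_up_closed:
  "FImp q p \<in> set \<Delta> \<Longrightarrow> x \<in> sem M s q \<Longrightarrow> y \<in> D s \<Longrightarrow> R s x y \<Longrightarrow> y \<in> sem M s q"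
  using principal_or_empty_up_closed premises_principal closed_dom_cod by blast

lemma concl_up_closed:
  "FImp q p \<in> set \<Delta> \<Longrightarrow> x \<in> sem M t p \<Longrightarrow> y \<in> D t \<Longrightarrow> R t x y \<Longrightarrow> y \<in> sem M t p"
  using principal_or_empty_up_closed concls_principal closed_dom_cod by blast

lemma sem_conj_imps_iff:
  "f \<in> sem_conj (TFun s t) \<Delta> \<longleftrightarrow>
   f \<in> D (TFun s t) \<and> (\<forall>x\<in>D s. m_app M (TFun s t) f x \<in> sem_conj t (active_concls s \<Delta> x))"
proof -
  have "(\<forall>\<delta>\<in>set \<Delta>. f \<in> sem M (TFun s t) \<delta>) \<longleftrightarrow>
    (\<forall>x\<in>D s. \<forall>p\<in>set (active_concls s \<Delta> x). m_app M (TFun s t) f x \<in> sem M t p)"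
    if "f \<in> D (TFun s t)"
  proof
    assume a: "\<forall>\<delta>\<in>set \<Delta>. f \<in> sem M (TFun s t) \<delta>"
    show "\<forall>x\<in>D s. \<forall>p\<in>set (active_concls s \<Delta> x). m_app M (TFun s t) f x \<in> sem M t p"
    proof (intro ballI)
      fix x p assume "p \<in> set (active_concls s \<Delta> x)"
      then obtain q where "FImp q p \<in> set \<Delta>" "x \<in> sem M s q" unfolding set_active_concls by blast
      then show "m_app M (TFun s t) f x \<in> sem M t p" using a by auto
    qed
  next
    assume a: "\<forall>x\<in>D s. \<forall>p\<in>set (active_concls s \<Delta> x). m_app M (TFun s t) f x \<in> sem M t p"
    have "f \<in> sem M (TFun s t) (FImp q p)" if qp: "FImp q p \<in> set \<Delta>" for q p
    proof -
      have "m_app M (TFun s t) f x \<in> sem M t p" if "x \<in> sem M s q" for x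
      proof -
        have "x \<in> D s" using that sem_subset[OF closed_dom_cod(1)] imp_wf[OF qp] by blast
        moreover have "p \<in> set (active_concls s \<Delta> x)" unfolding set_active_concls using qp that by blast
        ultimately show ?thesis using a by blast
      qed
      then show ?thesis using \<open>f \<in> D (TFun s t)\<close> by simp
    qed
    then show "\<forall>\<delta>\<in>set \<Delta>. f \<in> sem M (TFun s t) \<delta>" using imps by fastforce
  qed
  then show ?thesis
    using app_in[OF c] unfolding sem_conj_def by auto
qed

lemma active_concls_mono:
  "x \<in> D s \<Longrightarrow> y \<in> D s \<Longrightarrow> R s x y \<Longrightarrow> set (active_concls s \<Delta> x) \<subseteq> set (active_concls s \<Delta> y)"
  unfolding set_active_concls subset_iff using premise_up_closed by blast

text \<open>The premises are Scott open and finitely many, so the set of active conclusions is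
  already attained below the lub of a directed set.\<close>

lemma active_concls_at_lub:
  assumes dir: "directed_in (D s) (R s) S" and lub: "is_lub (D s) (R s) S x"
  obtains y where "y \<in> S" "set (active_concls s \<Delta> y) = set (active_concls s \<Delta> x)"
proof -
  have SD: "S \<subseteq> D s" and xD: "x \<in> D s" using dir lub unfolding directed_in_def is_lub_def by auto
  let ?I = "{q. (\<exists>p. FImp q p \<in> set \<Delta>) \<and> x \<in> sem M s q}"
  have fin: "finite ?I"
  proof (rule finite_subset)
    show "?I \<subseteq> (\<lambda>\<delta>. case \<delta> of FImp q p \<Rightarrow> q | _ \<Rightarrow> FTrue) ` set \<Delta>"
      by (auto intro!: image_eqI)
  qed simp
  have ex: "\<forall>q\<in>?I. \<exists>y\<in>S. y \<in> sem M s q"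
  proof
    fix q assume q: "q \<in> ?I"
    obtain p where qp: "FImp q p \<in> set \<Delta>" "x \<in> sem M s q" using q by auto
    have "principal_or_empty s (sem M s q)" "sem M s q \<noteq> {}" using premises_principal qp by auto
    then obtain d where d: "compact_el (D s) (R s) d" "sem M s q = upset M s d"
      unfolding principal_or_empty_def by blast
    then show "\<exists>y\<in>S. y \<in> sem M s q" using compact_upset_Scott_open[OF d(1) dir lub] qp(2) by simp
  qed
  have up: "\<forall>q\<in>?I. \<forall>y\<in>S. \<forall>y'\<in>S. y \<in> sem M s q \<and> R s y y' \<longrightarrow> y' \<in> sem M s q"
  proof (intro ballI impI)
    fix q y y' assume "q \<in> ?I" "y' \<in> S" "y \<in> sem M s q \<and> R s y y'"
    then show "y' \<in> sem M s q" using premise_up_closed SD by blast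
  qed
  obtain y where y: "y \<in> S" "\<forall>q\<in>?I. y \<in> sem M s q"
    using directed_in_finite_choice[OF po_on_dom[OF closed_dom_cod(1)] dir fin ex up] by blast
  have "R s y x" using lub y(1) unfolding is_lub_def by auto
  then have "set (active_concls s \<Delta> y) \<subseteq> set (active_concls s \<Delta> x)"
    using active_concls_mono y(1) SD xD by blast
  moreover have "set (active_concls s \<Delta> x) \<subseteq> set (active_concls s \<Delta> y)"
    using y(2) unfolding subset_iff set_active_concls by blast
  ultimately have "set (active_concls s \<Delta> y) = set (active_concls s \<Delta> x)" by (rule equalityI)
  then show ?thesis using that y(1) by blast
qed

text \<open>The conjunction of the implications denotes the upset of the step function sending x to
  the least element satisfying the conclusions active at x.\<close>

lemma step_fun_exists:
  assumes fibres: "\<forall>x\<in>D s. principal_or_empty t (sem_conj t (active_concls s \<Delta> x))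
    \<and> sem_conj t (active_concls s \<Delta> x) \<noteq> {}"
  obtains g where "scott_cont (D s) (R s) (D t) (R t) g"
    "\<forall>x\<in>D s. compact_el (D t) (R t) (g x) \<and> sem_conj t (active_concls s \<Delta> x) = upset M t (g x)"
proof -
  have "\<exists>c. compact_el (D t) (R t) c \<and> sem_conj t (active_concls s \<Delta> x) = upset M t c" if "x \<in> D s" for x
    using fibres that unfolding principal_or_empty_def by blast
  then obtain g where g: "\<forall>x\<in>D s. compact_el (D t) (R t) (g x) \<and> sem_conj t (active_concls s \<Delta> x) = upset M t (g x)"
    by metis
  have gD: "g x \<in> D t" if "x \<in> D s" for x using g that unfolding compact_el_def by blast
  have g_le: "R t (g x) (g y)"
    if "x \<in> D s" "y \<in> D s" "set (active_concls s \<Delta> x) \<subseteq> set (active_concls s \<Delta> y)" for x y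
  proof -
    have "sem_conj t (active_concls s \<Delta> y) \<subseteq> sem_conj t (active_concls s \<Delta> x)"
      using that(3) unfolding sem_conj_def by blast
    then show ?thesis using g that(1,2) upset_subset_imp_le[OF closed_dom_cod(2) gD[OF that(2)]] by simp
  qed
  have "is_lub (D t) (R t) (g ` S) (g x)"
    if dir: "directed_in (D s) (R s) S" and lub: "is_lub (D s) (R s) S x" for S x
  proof -
    have SD: "S \<subseteq> D s" and xD: "x \<in> D s" using dir lub unfolding directed_in_def is_lub_def by auto
    obtain y where y: "y \<in> S" "set (active_concls s \<Delta> y) = set (active_concls s \<Delta> x)"
      using active_concls_at_lub[OF dir lub] .
    have gxy: "R t (g x) (g y)" using g_le xD y SD by auto
    have "\<forall>w\<in>S. R t (g w) (g x)"
      using g_le active_concls_mono lub SD xD unfolding is_lub_def by blast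
    moreover have "R t (g x) z" if "z \<in> D t" "\<forall>w\<in>g ` S. R t w z" for z
      using R_trans[OF closed_dom_cod(2) gD[OF xD] gD _ gxy] that y(1) SD by blast
    ultimately show ?thesis using gD xD unfolding is_lub_def by blast
  qed
  then have "scott_cont (D s) (R s) (D t) (R t) g"
    unfolding scott_cont_def using gD g_le active_concls_mono by blast
  then show ?thesis using that g by blast
qed

context
  fixes g
  assumes g_cont: "scott_cont (D s) (R s) (D t) (R t) g"
    and g: "\<forall>x\<in>D s. compact_el (D t) (R t) (g x) \<and> sem_conj t (active_concls s \<Delta> x) = upset M t (g x)"
begin

lemma sem_conj_imps_eq_upset:
  "sem_conj (TFun s t) \<Delta> = upset M (TFun s t) (lamM M s (TFun s t) g)"
proof (intro set_eqI)
  let ?T = "TFun s t" and ?ap = "m_app M (TFun s t)" and ?f0 = "lamM M s (TFun s t) g"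
  fix f
  have "f \<in> sem_conj ?T \<Delta> \<longleftrightarrow> f \<in> D ?T \<and> (\<forall>x\<in>D s. ?ap f x \<in> upset M t (g x))"
    using sem_conj_imps_iff g by simp
  also have "\<dots> \<longleftrightarrow> f \<in> D ?T \<and> (\<forall>x\<in>D s. R t (g x) (?ap f x))"
    unfolding upset_def using app_in[OF c] by auto
  also have "\<dots> \<longleftrightarrow> f \<in> upset M ?T ?f0"
    unfolding upset_def using le_fun_iff[OF c] lamM[OF c g_cont] by auto
  finally show "f \<in> sem_conj ?T \<Delta> \<longleftrightarrow> f \<in> upset M ?T ?f0" .
qed

lemma imp_sat_below_lub:
  assumes qp: "FImp q p \<in> set \<Delta>" and dir: "directed_in (D (TFun s t)) (R (TFun s t)) F"
    and lub: "is_lub (D (TFun s t)) (R (TFun s t)) F h" and le: "R (TFun s t) (lamM M s (TFun s t) g) h"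
  shows "\<exists>f\<in>F. f \<in> sem M (TFun s t) (FImp q p)"
proof -
  let ?T = "TFun s t" and ?ap = "m_app M (TFun s t)" and ?f0 = "lamM M s (TFun s t) g"
  have FD: "F \<subseteq> D ?T" and hD: "h \<in> D ?T" using dir lub unfolding directed_in_def is_lub_def by auto
  show ?thesis
  proof (cases "sem M s q = {}")
    case True
    obtain f where "f \<in> F" using dir unfolding directed_in_def by auto
    then show ?thesis using True FD by auto
  next
    case False
    then obtain d where d: "compact_el (D s) (R s) d" "sem M s q = upset M s d"
      using premises_principal qp unfolding principal_or_empty_def by blast
    have dD: "d \<in> D s" using d(1) unfolding compact_el_def by blast
    have "R t (g d) (?ap h d)" using le le_fun_iff[OF c lamM(1)[OF c g_cont] hD] lamM(2)[OF c g_cont] dD by simp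
    moreover have "directed_in (D t) (R t) ((\<lambda>f. ?ap f d) ` F)"
      by (rule directed_in_image[OF dir]) (use app_in[OF c _ dD] le_fun_iff[OF c] dD in auto)
    ultimately obtain f where f: "f \<in> F" "R t (g d) (?ap f d)"
      using g dD fun_lub[OF c dir lub dD] unfolding compact_el_def by blast
    have fD: "f \<in> D ?T" using f FD by auto
    have "d \<in> sem M s q" using d in_upset_self[OF closed_dom_cod(1) dD] by simp
    then have "p \<in> set (active_concls s \<Delta> d)" unfolding set_active_concls using qp by blast
    moreover have "?ap f d \<in> sem_conj t (active_concls s \<Delta> d)"
      using g dD f app_in[OF c fD dD] unfolding upset_def by auto
    ultimately have fd: "?ap f d \<in> sem M t p" unfolding sem_conj_def by auto
    have "?ap f x \<in> sem M t p" if "x \<in> sem M s q" for x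
    proof -
      have "x \<in> D s" "R s d x" using that d unfolding upset_def by auto
      then show ?thesis using concl_up_closed[OF qp fd] app_in[OF c fD] app_mono[OF c fD dD] by blast
    qed
    then show ?thesis using f fD by auto
  qed
qed

lemma compact_lam_step: "compact_el (D (TFun s t)) (R (TFun s t)) (lamM M s (TFun s t) g)"
  unfolding compact_el_def
proof (intro conjI allI impI)
  let ?T = "TFun s t" and ?f0 = "lamM M s (TFun s t) g"
  show "?f0 \<in> D ?T" using lamM[OF c g_cont] by blast
  fix F h assume a: "directed_in (D ?T) (R ?T) F \<and> is_lub (D ?T) (R ?T) F h \<and> R ?T ?f0 h"
  have FD: "F \<subseteq> D ?T" using a unfolding directed_in_def by auto
  have ex: "\<forall>\<delta>\<in>set \<Delta>. \<exists>f\<in>F. f \<in> sem M ?T \<delta>"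
  proof
    fix \<delta> assume "\<delta> \<in> set \<Delta>"
    then obtain q p where "\<delta> = FImp q p" "FImp q p \<in> set \<Delta>" by (rule imps_cases)
    then show "\<exists>f\<in>F. f \<in> sem M ?T \<delta>" using imp_sat_below_lub a by blast
  qed
  have up: "\<forall>\<delta>\<in>set \<Delta>. \<forall>f\<in>F. \<forall>f'\<in>F. f \<in> sem M ?T \<delta> \<and> R ?T f f' \<longrightarrow> f' \<in> sem M ?T \<delta>"
  proof (intro ballI impI)
    fix \<delta> f f' assume \<delta>: "\<delta> \<in> set \<Delta>" and ff: "f \<in> F" "f' \<in> F" "f \<in> sem M ?T \<delta> \<and> R ?T f f'"
    obtain q p where qp: "\<delta> = FImp q p" "FImp q p \<in> set \<Delta>" using \<delta> by (rule imps_cases)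
    have fD: "f \<in> D ?T" "f' \<in> D ?T" using ff FD by auto
    have "m_app M ?T f' x \<in> sem M t p" if "x \<in> sem M s q" for x
    proof -
      have xD: "x \<in> D s" using that sem_subset[OF closed_dom_cod(1)] imp_wf[OF qp(2)] by blast
      have "m_app M ?T f x \<in> sem M t p" using ff qp that by auto
      moreover have "R t (m_app M ?T f x) (m_app M ?T f' x)" using le_fun_iff[OF c fD] ff xD by auto
      ultimately show ?thesis using concl_up_closed[OF qp(2)] app_in[OF c fD(2) xD] by blast
    qed
    then show "f' \<in> sem M ?T \<delta>" using qp fD by auto
  qed
  have dir: "directed_in (D ?T) (R ?T) F" using a by blast
  obtain f where f: "f \<in> F" "\<forall>\<delta>\<in>set \<Delta>. f \<in> sem M ?T \<delta>"
    using directed_in_finite_choice[OF po_on_dom[OF c] dir finite_set ex up] by blast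
  then have "f \<in> sem_conj ?T \<Delta>" using FD unfolding sem_conj_def by auto
  then show "\<exists>e\<in>F. R ?T ?f0 e" using f(1) sem_conj_imps_eq_upset unfolding upset_def by auto
qed

end

lemma principal_or_empty_imps:
  assumes "\<forall>x\<in>D s. principal_or_empty t (sem_conj t (active_concls s \<Delta> x))"
  shows "principal_or_empty (TFun s t) (sem_conj (TFun s t) \<Delta>)"
proof (cases "\<exists>x\<in>D s. sem_conj t (active_concls s \<Delta> x) = {}")
  case True
  then have "sem_conj (TFun s t) \<Delta> = {}" using sem_conj_imps_iff by blast
  then show ?thesis unfolding principal_or_empty_def by simp
next
  case False
  then obtain g where "scott_cont (D s) (R s) (D t) (R t) g"
    "\<forall>x\<in>D s. compact_el (D t) (R t) (g x) \<and> sem_conj t (active_concls s \<Delta> x) = upset M t (g x)"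
    using step_fun_exists assms by blast
  then show ?thesis
    using sem_conj_imps_eq_upset compact_lam_step unfolding principal_or_empty_def by blast
qed

end

definition conj_principal_below :: "nat \<Rightarrow> bool" where
  "conj_principal_below n \<longleftrightarrow> (\<forall>T \<Delta>. conj_weight \<Delta> < n \<longrightarrow> closed_ty T \<longrightarrow> (\<forall>\<delta>\<in>set \<Delta>. wf_form T \<delta>)
     \<longrightarrow> principal_or_empty T (sem_conj T \<Delta>))"

lemma conj_principal_belowD:
  "conj_principal_below n \<Longrightarrow> conj_weight \<Delta> < n \<Longrightarrow> closed_ty T \<Longrightarrow> \<forall>\<delta>\<in>set \<Delta>. wf_form T \<delta> \<Longrightarrow>
   principal_or_empty T (sem_conj T \<Delta>)"
  unfolding conj_principal_below_def by blast

lemma sem_principal_if_lighter: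
  assumes IH: "conj_principal_below (conj_weight \<Delta>)" and "\<delta> \<in> set \<Delta>" "size \<eta> < size \<delta>"
    and "closed_ty T" "wf_form T \<eta>"
  shows "principal_or_empty T (sem M T \<eta>)"
proof -
  have "conj_weight [\<eta>] < conj_weight \<Delta>"
    using assms(2,3) member_le_sum_list[of "form_weight \<delta>" "map form_weight \<Delta>"]
    unfolding conj_weight_def form_weight_def by auto
  then show ?thesis using conj_principal_belowD[OF IH] sem_conj_single assms(4,5) by fastforce
qed

lemma principal_unit:
  assumes "\<Delta> \<noteq> []" "\<forall>\<delta>\<in>set \<Delta>. \<delta> = FUnit"
  shows "principal_or_empty TUnit (sem_conj TUnit \<Delta>)"
proof -
  have "sem_conj TUnit \<Delta> = upset M TUnit (m_top M)"
    using assms unit_dom upset_top unfolding sem_conj_def by (cases \<Delta>) auto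
  then show ?thesis using compact_top unfolding principal_or_empty_def by blast
qed

lemma principal_prod:
  assumes IH: "conj_principal_below (conj_weight \<Delta>)" and c: "closed_ty (TProd t1 t2)" and ne: "\<Delta> \<noteq> []"
    and forms: "\<forall>\<delta>\<in>set \<Delta>. (\<exists>p. \<delta> = FPi1 p \<and> wf_form t1 p) \<or> (\<exists>p. \<delta> = FPi2 p \<and> wf_form t2 p)"
  shows "principal_or_empty (TProd t1 t2) (sem_conj (TProd t1 t2) \<Delta>)"
proof -
  have "principal_or_empty t1 (sem_conj t1 [p. FPi1 p \<leftarrow> \<Delta>])"
    "principal_or_empty t2 (sem_conj t2 [p. FPi2 p \<leftarrow> \<Delta>])"
    using conj_principal_belowD[OF IH conj_weight_modal_parts(1)[OF ne]]
      conj_principal_belowD[OF IH conj_weight_modal_parts(2)[OF ne]] forms c by fastforce+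
  moreover have "\<forall>\<delta>\<in>set \<Delta>. (\<exists>p. \<delta> = FPi1 p) \<or> (\<exists>p. \<delta> = FPi2 p)" using forms by blast
  ultimately show ?thesis using sem_conj_prod[OF _ c] principal_or_empty_pi[OF c] by simp
qed

lemma principal_fold:
  assumes IH: "conj_principal_below (conj_weight \<Delta>)" and c: "closed_ty (TMu a t)" and ne: "\<Delta> \<noteq> []"
    and forms: "\<forall>\<delta>\<in>set \<Delta>. \<exists>p. \<delta> = FFold p \<and> wf_form (subst t a (TMu a t)) p"
  shows "principal_or_empty (TMu a t) (sem_conj (TMu a t) \<Delta>)"
proof -
  have "principal_or_empty (subst t a (TMu a t)) (sem_conj (subst t a (TMu a t)) [p. FFold p \<leftarrow> \<Delta>])"
    using conj_principal_belowD[OF IH conj_weight_modal_parts(3)[OF ne] closed_ty_unfold[OF c]] forms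
    by fastforce
  moreover have "\<forall>\<delta>\<in>set \<Delta>. \<exists>p. \<delta> = FFold p" using forms by blast
  ultimately show ?thesis using sem_conj_fold[OF _ c] principal_or_empty_unfold[OF c] by simp
qed

lemma principal_sum:
  assumes IH: "conj_principal_below (conj_weight \<Delta>)" and c: "closed_ty (TSum t1 t2)" and ne: "\<Delta> \<noteq> []"
    and forms: "\<forall>\<delta>\<in>set \<Delta>. \<exists>k p. \<delta> = FInj k p \<and> wf_form (pick k t1 t2) p"
  shows "principal_or_empty (TSum t1 t2) (sem_conj (TSum t1 t2) \<Delta>)"
proof (cases "\<exists>k. \<forall>\<delta>\<in>set \<Delta>. \<exists>p. \<delta> = FInj k p \<and> wf_form (pick k t1 t2) p")
  case True
  then obtain k where k: "\<forall>\<delta>\<in>set \<Delta>. \<exists>p. \<delta> = FInj k p \<and> wf_form (pick k t1 t2) p" by blast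
  have "\<forall>p\<in>set (inj_parts k \<Delta>). wf_form (pick k t1 t2) p" using k by (cases k) auto
  then have "principal_or_empty (pick k t1 t2) (sem_conj (pick k t1 t2) (inj_parts k \<Delta>))"
    using conj_principal_belowD[OF IH conj_weight_modal_parts(5)[OF ne] closed_summand[OF c]] by blast
  then show ?thesis using sem_conj_inj[OF k ne c] principal_or_empty_sum_inj[OF c] by simp
next
  case False
  have wf: "wf_form (pick k t1 t2) p" if "FInj k p \<in> set \<Delta>" for k p
    using forms that by fastforce
  have "\<exists>p. FInj k p \<in> set \<Delta>" for k
  proof (rule ccontr)
    assume none: "\<nexists>p. FInj k p \<in> set \<Delta>"
    have "\<exists>p. \<delta> = FInj (\<not> k) p \<and> wf_form (pick (\<not> k) t1 t2) p" if \<delta>: "\<delta> \<in> set \<Delta>" for \<delta>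
    proof -
      obtain k' p where kp: "\<delta> = FInj k' p" "wf_form (pick k' t1 t2) p" using forms \<delta> by blast
      then have "k' = (\<not> k)" using \<delta> none by (cases k; cases k') auto
      then show ?thesis using kp by blast
    qed
    then show False using False by blast
  qed
  then obtain p1 p2 where p: "FInj True p1 \<in> set \<Delta>" "FInj False p2 \<in> set \<Delta>" by blast
  have "x \<notin> sem_conj (TSum t1 t2) \<Delta>" for x
  proof
    assume "x \<in> sem_conj (TSum t1 t2) \<Delta>"
    then have "x \<in> sem M (TSum t1 t2) (FInj1 p1)" "x \<in> sem M (TSum t1 t2) (FInj2 p2)"
      using p unfolding sem_conj_def by auto
    then obtain y1 y2 where "y1 \<in> sem M t1 p1" "y2 \<in> sem M t2 p2"
      "sum_inj True (TSum t1 t2) y1 = sum_inj False (TSum t1 t2) y2" by auto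
    moreover have "sem M t1 p1 \<subseteq> D (pick True t1 t2)" "sem M t2 p2 \<subseteq> D (pick False t1 t2)"
      using sem_subset[OF closed_summand[OF c]] wf p by fastforce+
    ultimately show False using sum_inj_eq_iff[OF c] by blast
  qed
  then show ?thesis unfolding principal_or_empty_def by blast
qed

lemma principal_fun:
  assumes IH: "conj_principal_below (conj_weight \<Delta>)" and c: "closed_ty (TFun s t)" and ne: "\<Delta> \<noteq> []"
    and imps: "\<forall>\<delta>\<in>set \<Delta>. \<exists>q p. \<delta> = FImp q p \<and> wf_form s q \<and> wf_form t p"
  shows "principal_or_empty (TFun s t) (sem_conj (TFun s t) \<Delta>)"
proof (rule principal_or_empty_imps[OF c imps])
  show "\<forall>q p. FImp q p \<in> set \<Delta> \<longrightarrow> principal_or_empty s (sem M s q)"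
    "\<forall>q p. FImp q p \<in> set \<Delta> \<longrightarrow> principal_or_empty t (sem M t p)"
    using sem_principal_if_lighter[OF IH] imps c by fastforce+
  show "\<forall>x\<in>D s. principal_or_empty t (sem_conj t (active_concls s \<Delta> x))"
    using conj_principal_belowD[OF IH] conj_weight_modal_parts(4)[OF ne] imps c
    unfolding active_concls_def by fastforce
qed

lemma principal_modal:
  assumes IH: "conj_principal_below (conj_weight \<Delta>)" and c: "closed_ty T"
    and wf: "\<forall>\<delta>\<in>set \<Delta>. wf_form T \<delta>" and ne: "\<Delta> \<noteq> []"
    and modal: "\<forall>\<delta>\<in>set \<Delta>. \<delta> \<noteq> FTrue \<and> \<delta> \<noteq> FFalse \<and> (\<forall>p q. \<delta> \<noteq> FAnd p q)"
  shows "principal_or_empty T (sem_conj T \<Delta>)"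
proof -
  note shape = wf_form_modal[OF wf[rule_format] modal[rule_format, THEN conjunct1]
      modal[rule_format, THEN conjunct2, THEN conjunct1] modal[rule_format, THEN conjunct2, THEN conjunct2]]
  show ?thesis
  proof (cases T)
    case TUnit
    then show ?thesis using principal_unit[OF ne] shape(1) by simp
  next
    case (TProd t1 t2)
    then show ?thesis using principal_prod[OF IH _ ne] c shape(2) by simp
  next
    case (TSum t1 t2)
    then show ?thesis using principal_sum[OF IH _ ne] c shape(3) by simp
  next
    case (TFun t1 t2)
    then show ?thesis using principal_fun[OF IH _ ne] c shape(4) by simp
  next
    case (TMu a t)
    then show ?thesis using principal_fold[OF IH _ ne] c shape(5) by simp
  qed (use c in simp)
qed

lemma sem_conj_remove1:
  assumes "\<delta> \<in> set \<Delta>"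
  shows "sem_conj T \<Delta> = sem_conj T (remove1 \<delta> \<Delta>) \<inter> sem M T \<delta>"
proof -
  have "set \<Delta> = insert \<delta> (set (remove1 \<delta> \<Delta>))"
    using assms by (induction \<Delta>) auto
  then show ?thesis unfolding sem_conj_def by auto
qed

lemma sem_conj_principal:
  "closed_ty T \<Longrightarrow> \<forall>\<delta>\<in>set \<Delta>. wf_form T \<delta> \<Longrightarrow> principal_or_empty T (sem_conj T \<Delta>)"
proof (induction "conj_weight \<Delta>" arbitrary: T \<Delta> rule: less_induct)
  case less
  have IH: "conj_principal_below (conj_weight \<Delta>)" unfolding conj_principal_below_def using less.hyps by blast
  have wf_remove1: "\<forall>\<eta>\<in>set (remove1 \<delta> \<Delta>). wf_form T \<eta>" for \<delta>
    using less.prems(2) set_remove1_subset[of \<delta> \<Delta>] by blast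
  have weight_remove1: "conj_weight \<Delta> = form_weight \<delta> + conj_weight (remove1 \<delta> \<Delta>)" if "\<delta> \<in> set \<Delta>" for \<delta>
    using that unfolding conj_weight_def by (simp add: sum_list_map_remove1)
  consider (empty) "\<Delta> = []" | (false) "FFalse \<in> set \<Delta>" | (true) "FTrue \<in> set \<Delta>"
    | (conj) p q where "FAnd p q \<in> set \<Delta>"
    | (modal) "\<Delta> \<noteq> []" "\<forall>\<delta>\<in>set \<Delta>. \<delta> \<noteq> FTrue \<and> \<delta> \<noteq> FFalse \<and> (\<forall>p q. \<delta> \<noteq> FAnd p q)"
    by blast
  then show ?case
  proof cases
    case empty
    then have "sem_conj T \<Delta> = upset M T (bottomM M T)"
      using upset_bottomM[OF less.prems(1)] unfolding sem_conj_def by simp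
    then show ?thesis using compact_bottomM[OF less.prems(1)] unfolding principal_or_empty_def by blast
  next
    case false
    then show ?thesis unfolding sem_conj_def principal_or_empty_def by auto
  next
    case true
    have "conj_weight (remove1 FTrue \<Delta>) < conj_weight \<Delta>"
      using weight_remove1[OF true] by (simp add: form_weight_def)
    moreover have "sem_conj T \<Delta> = sem_conj T (remove1 FTrue \<Delta>)"
      using sem_conj_remove1[OF true] unfolding sem_conj_def by auto
    ultimately show ?thesis using less.hyps[OF _ less.prems(1) wf_remove1] by simp
  next
    case (conj p q)
    let ?\<Delta>' = "p # q # remove1 (FAnd p q) \<Delta>"
    have "conj_weight ?\<Delta>' < conj_weight \<Delta>"
      using weight_remove1[OF conj] by (simp add: conj_weight_def form_weight_def)
    moreover have "sem_conj T \<Delta> = sem_conj T ?\<Delta>'"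
      using sem_conj_remove1[OF conj] unfolding sem_conj_def by auto
    moreover have "\<forall>\<eta>\<in>set ?\<Delta>'. wf_form T \<eta>" using wf_remove1 less.prems(2) conj by auto
    ultimately show ?thesis using less.hyps[OF _ less.prems(1)] by simp
  next
    case modal
    then show ?thesis using principal_modal[OF IH less.prems] by blast
  qed
qed

lemma sem_principal:
  assumes "closed_ty T" "wf_form T \<delta>" "sem M T \<delta> \<noteq> {}"
  shows "\<exists>d. compact_el (D T) (R T) d \<and> sem M T \<delta> = upset M T d"
  using sem_conj_principal[of T "[\<delta>]"] sem_conj_single assms unfolding principal_or_empty_def by auto

section \<open>Functorial action of types\<close>

definition cont_endo :: "ty \<Rightarrow> ('u \<Rightarrow> 'u) \<Rightarrow> bool" where
  "cont_endo T g \<longleftrightarrow> scott_cont (D T) (R T) (D T) (R T) g"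

definition pointwise_le :: "ty \<Rightarrow> ('u \<Rightarrow> 'u) \<Rightarrow> ('u \<Rightarrow> 'u) \<Rightarrow> bool" where
  "pointwise_le T g g' \<longleftrightarrow> (\<forall>x\<in>D T. R T (g x) (g' x))"

lemma cont_endo_in: "cont_endo T g \<Longrightarrow> x \<in> D T \<Longrightarrow> g x \<in> D T"
  unfolding cont_endo_def by (rule scott_cont_in)

lemma cont_endo_mono: "cont_endo T g \<Longrightarrow> x \<in> D T \<Longrightarrow> y \<in> D T \<Longrightarrow> R T x y \<Longrightarrow> R T (g x) (g y)"
  unfolding cont_endo_def by (rule scott_cont_mono)

lemma cont_endo_lub:
  "cont_endo T g \<Longrightarrow> directed_in (D T) (R T) S \<Longrightarrow> is_lub (D T) (R T) S x \<Longrightarrow> is_lub (D T) (R T) (g ` S) (g x)"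
  unfolding cont_endo_def by (rule scott_cont_lub)

lemma cont_endo_id: "cont_endo T id"
  unfolding cont_endo_def scott_cont_def is_lub_def by auto

lemma cont_endo_const_bottom:
  assumes c: "closed_ty T" shows "cont_endo T (\<lambda>_. bottomM M T)"
proof -
  have "is_lub (D T) (R T) ((\<lambda>_. bottomM M T) ` S) (bottomM M T)" if "directed_in (D T) (R T) S" for S
    using that bottomM_in[OF c] bottomM_least[OF c] unfolding is_lub_def directed_in_def by auto
  then show ?thesis
    unfolding cont_endo_def scott_cont_def using bottomM_in[OF c] R_refl[OF c] by blast
qed

lemma pointwise_le_refl: "closed_ty T \<Longrightarrow> cont_endo T g \<Longrightarrow> pointwise_le T g g"
  unfolding pointwise_le_def using R_refl cont_endo_in by blast

text \<open>Approximations of the least solution of the recursive equation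
  g = fold \<circ> A g \<circ> unfold, where A is the action of the body of a recursive type.\<close>

definition unroll :: "ty \<Rightarrow> (('u \<Rightarrow> 'u) \<Rightarrow> 'u \<Rightarrow> 'u) \<Rightarrow> nat \<Rightarrow> 'u \<Rightarrow> 'u" where
  "unroll T A n = ((\<lambda>g. m_fold M T \<circ> A g \<circ> m_unfold M T) ^^ n) (\<lambda>_. bottomM M T)"

definition unroll_lub :: "ty \<Rightarrow> (('u \<Rightarrow> 'u) \<Rightarrow> 'u \<Rightarrow> 'u) \<Rightarrow> 'u \<Rightarrow> 'u" where
  "unroll_lub T A x = lubM M T (range (\<lambda>n. unroll T A n x))"

lemma unroll_0: "unroll T A 0 = (\<lambda>_. bottomM M T)"
  unfolding unroll_def by simp

lemma unroll_Suc: "unroll T A (Suc n) = m_fold M T \<circ> A (unroll T A n) \<circ> m_unfold M T"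
  unfolding unroll_def by simp

lemma unroll_Suc_apply: "unroll T A (Suc n) x = m_fold M T (A (unroll T A n) (m_unfold M T x))"
  unfolding unroll_def by simp

context
  fixes a t A
  assumes c: "closed_ty (TMu a t)"
    and A_cont: "\<And>g. cont_endo (TMu a t) g \<Longrightarrow> cont_endo (subst t a (TMu a t)) (A g)"
begin

lemma unroll_cont: "cont_endo (TMu a t) (unroll (TMu a t) A n)"
proof (induction n)
  case 0 then show ?case using cont_endo_const_bottom[OF c] by (simp add: unroll_0)
next
  case (Suc n)
  have "scott_cont (D (TMu a t)) (R (TMu a t)) (D (TMu a t)) (R (TMu a t))
    (m_fold M (TMu a t) \<circ> (A (unroll (TMu a t) A n) \<circ> m_unfold M (TMu a t)))"
    using scott_cont_comp[OF scott_cont_comp[OF unfold_cont[OF c]] fold_cont[OF c]] A_cont[OF Suc]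
    unfolding cont_endo_def by blast
  then show ?case unfolding cont_endo_def by (simp add: unroll_Suc o_assoc)
qed

lemma unroll_in: "x \<in> D (TMu a t) \<Longrightarrow> unroll (TMu a t) A n x \<in> D (TMu a t)"
  using cont_endo_in[OF unroll_cont] .

end

lemma unroll_le:
  assumes c: "closed_ty (TMu a t)"
    and A_cont: "\<And>g. cont_endo (TMu a t) g \<Longrightarrow> cont_endo (subst t a (TMu a t)) (A g)"
    and A'_cont: "\<And>g. cont_endo (TMu a t) g \<Longrightarrow> cont_endo (subst t a (TMu a t)) (A' g)"
    and le: "\<And>g g'. cont_endo (TMu a t) g \<Longrightarrow> cont_endo (TMu a t) g' \<Longrightarrow> pointwise_le (TMu a t) g g' \<Longrightarrow>
       pointwise_le (subst t a (TMu a t)) (A g) (A' g')"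
  shows "pointwise_le (TMu a t) (unroll (TMu a t) A n) (unroll (TMu a t) A' n)"
proof (induction n)
  case 0 then show ?case using pointwise_le_refl[OF c cont_endo_const_bottom[OF c]] by (simp add: unroll_0)
next
  case (Suc n)
  let ?T = "TMu a t" and ?U = "subst t a (TMu a t)"
  show ?case unfolding pointwise_le_def
  proof
    fix x assume x: "x \<in> D ?T"
    have ux: "m_unfold M ?T x \<in> D ?U" using unfold_in[OF c x] .
    have "R ?U (A (unroll ?T A n) (m_unfold M ?T x)) (A' (unroll ?T A' n) (m_unfold M ?T x))"
      using le[OF unroll_cont[where A=A, OF c A_cont] unroll_cont[where A=A', OF c A'_cont] Suc] ux
      unfolding pointwise_le_def by blast
    then show "R ?T (unroll ?T A (Suc n) x) (unroll ?T A' (Suc n) x)"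
      using le_fold_iff[OF c] cont_endo_in[OF A_cont[OF unroll_cont[where A=A, OF c A_cont]] ux]
        cont_endo_in[OF A'_cont[OF unroll_cont[where A=A', OF c A'_cont]] ux] by (simp add: unroll_Suc_apply)
  qed
qed

context
  fixes a t A
  assumes c: "closed_ty (TMu a t)"
    and A_cont: "\<And>g. cont_endo (TMu a t) g \<Longrightarrow> cont_endo (subst t a (TMu a t)) (A g)"
    and A_mono: "\<And>g g'. cont_endo (TMu a t) g \<Longrightarrow> cont_endo (TMu a t) g' \<Longrightarrow> pointwise_le (TMu a t) g g' \<Longrightarrow>
       pointwise_le (subst t a (TMu a t)) (A g) (A g')"
begin

lemma unroll_step: "pointwise_le (TMu a t) (unroll (TMu a t) A n) (unroll (TMu a t) A (Suc n))"
proof (induction n)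
  case 0
  show ?case unfolding pointwise_le_def using bottomM_least[OF c] unroll_in[where A=A, OF c A_cont]
    by (simp add: unroll_0)
next
  case (Suc n)
  let ?T = "TMu a t" and ?U = "subst t a (TMu a t)"
  show ?case unfolding pointwise_le_def
  proof
    fix x assume x: "x \<in> D ?T"
    have ux: "m_unfold M ?T x \<in> D ?U" using unfold_in[OF c x] .
    have "R ?U (A (unroll ?T A n) (m_unfold M ?T x)) (A (unroll ?T A (Suc n)) (m_unfold M ?T x))"
      using A_mono[OF unroll_cont[where A=A, OF c A_cont] unroll_cont[where A=A, OF c A_cont] Suc] ux
      unfolding pointwise_le_def by blast
    then show "R ?T (unroll ?T A (Suc n) x) (unroll ?T A (Suc (Suc n)) x)"
      using le_fold_iff[OF c] cont_endo_in[OF A_cont[OF unroll_cont[where A=A, OF c A_cont]] ux]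
      by (simp add: unroll_Suc_apply)
  qed
qed

lemma unroll_lub_is_lub:
  "x \<in> D (TMu a t) \<Longrightarrow>
   is_lub (D (TMu a t)) (R (TMu a t)) (range (\<lambda>n. unroll (TMu a t) A n x)) (unroll_lub (TMu a t) A x)"
  unfolding unroll_lub_def
  by (rule lubM_is_lub[OF c], rule directed_in_chain[OF po_on_dom[OF c]])
    (use unroll_in[where A=A, OF c A_cont] unroll_step in \<open>auto simp: pointwise_le_def\<close>)

lemma unroll_lub_cont: "cont_endo (TMu a t) (unroll_lub (TMu a t) A)"
  unfolding cont_endo_def
  by (rule scott_cont_pointwise_lub[where I=UNIV and p="unroll (TMu a t) A", OF _ _ po_on_dom[OF c]])
    (use unroll_cont[where A=A, OF c A_cont] unroll_lub_is_lub in \<open>auto simp: cont_endo_def\<close>)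

end

definition prod_map :: "ty \<Rightarrow> ty \<Rightarrow> ('u \<Rightarrow> 'u) \<Rightarrow> ('u \<Rightarrow> 'u) \<Rightarrow> 'u \<Rightarrow> 'u" where
  "prod_map T1 T2 h1 h2 x =
     pairM M (TProd T1 T2) (h1 (m_pi1 M (TProd T1 T2) x)) (h2 (m_pi2 M (TProd T1 T2) x))"

definition fun_map :: "ty \<Rightarrow> ty \<Rightarrow> ('u \<Rightarrow> 'u) \<Rightarrow> ('u \<Rightarrow> 'u) \<Rightarrow> 'u \<Rightarrow> 'u" where
  "fun_map T1 T2 h1 h2 f = lamM M T1 (TFun T1 T2) (\<lambda>x. h2 (m_app M (TFun T1 T2) f (h1 x)))"

context
  fixes T1 T2 h1 h2
  assumes h1: "cont_endo T1 h1" and h2: "cont_endo T2 h2"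
begin

lemma prod_map:
  assumes c: "closed_ty (TProd T1 T2)" and x: "x \<in> D (TProd T1 T2)"
  shows "prod_map T1 T2 h1 h2 x \<in> D (TProd T1 T2)"
    "m_pi1 M (TProd T1 T2) (prod_map T1 T2 h1 h2 x) = h1 (m_pi1 M (TProd T1 T2) x)"
    "m_pi2 M (TProd T1 T2) (prod_map T1 T2 h1 h2 x) = h2 (m_pi2 M (TProd T1 T2) x)"
  using pairM[OF c cont_endo_in[OF h1 pi_in(1)[OF c x]] cont_endo_in[OF h2 pi_in(2)[OF c x]]]
  unfolding prod_map_def by auto

lemma prod_map_cont:
  assumes c: "closed_ty (TProd T1 T2)"
  shows "cont_endo (TProd T1 T2) (prod_map T1 T2 h1 h2)"
proof -
  let ?T = "TProd T1 T2" and ?F = "prod_map T1 T2 h1 h2"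
    and ?p1 = "m_pi1 M (TProd T1 T2)" and ?p2 = "m_pi2 M (TProd T1 T2)"
  have p1: "scott_cont (D ?T) (R ?T) (D T1) (R T1) (h1 \<circ> ?p1)"
    and p2: "scott_cont (D ?T) (R ?T) (D T2) (R T2) (h2 \<circ> ?p2)"
    using scott_cont_comp[OF pi_cont(1)[OF c]] scott_cont_comp[OF pi_cont(2)[OF c]] h1 h2
    unfolding cont_endo_def by blast+
  have mono: "R ?T (?F x) (?F y)" if "x \<in> D ?T" "y \<in> D ?T" "R ?T x y" for x y
    using le_prod_iff[OF c prod_map(1)[OF c that(1)] prod_map(1)[OF c that(2)]]
      prod_map(2,3)[OF c that(1)] prod_map(2,3)[OF c that(2)]
      scott_cont_mono[OF p1 that] scott_cont_mono[OF p2 that] by simp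
  have "is_lub (D ?T) (R ?T) (?F ` S) (?F x)" if "directed_in (D ?T) (R ?T) S" "is_lub (D ?T) (R ?T) S x" for S x
  proof (rule prod_is_lubI[OF c])
    have SD: "S \<subseteq> D ?T" and xD: "x \<in> D ?T" using that unfolding directed_in_def is_lub_def by auto
    show "?F ` S \<subseteq> D ?T" "?F x \<in> D ?T" using prod_map(1)[OF c] SD xD by auto
    have "?p1 ` ?F ` S = (h1 \<circ> ?p1) ` S" "?p2 ` ?F ` S = (h2 \<circ> ?p2) ` S"
      using prod_map(2,3)[OF c] SD by (auto simp: image_iff subset_iff)
    then show "is_lub (D T1) (R T1) (?p1 ` ?F ` S) (?p1 (?F x))" "is_lub (D T2) (R T2) (?p2 ` ?F ` S) (?p2 (?F x))"
      using scott_cont_lub[OF p1 that] scott_cont_lub[OF p2 that] prod_map(2,3)[OF c xD] by simp_all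
  qed
  then show ?thesis unfolding cont_endo_def scott_cont_def using prod_map(1)[OF c] mono by blast
qed

lemma fun_map:
  assumes c: "closed_ty (TFun T1 T2)" and f: "f \<in> D (TFun T1 T2)"
  shows "fun_map T1 T2 h1 h2 f \<in> D (TFun T1 T2)"
    "\<forall>x\<in>D T1. m_app M (TFun T1 T2) (fun_map T1 T2 h1 h2 f) x = h2 (m_app M (TFun T1 T2) f (h1 x))"
proof -
  have "scott_cont (D T1) (R T1) (D T2) (R T2) (h2 \<circ> (m_app M (TFun T1 T2) f \<circ> h1))"
    using scott_cont_comp[OF scott_cont_comp[OF _ app_cont[OF c f]]] h1 h2 unfolding cont_endo_def by blast
  then have "scott_cont (D T1) (R T1) (D T2) (R T2) (\<lambda>x. h2 (m_app M (TFun T1 T2) f (h1 x)))"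
    by (simp add: comp_def)
  from lamM[OF c this] show "fun_map T1 T2 h1 h2 f \<in> D (TFun T1 T2)"
    "\<forall>x\<in>D T1. m_app M (TFun T1 T2) (fun_map T1 T2 h1 h2 f) x = h2 (m_app M (TFun T1 T2) f (h1 x))"
    unfolding fun_map_def by auto
qed

lemma fun_map_cont:
  assumes c: "closed_ty (TFun T1 T2)"
  shows "cont_endo (TFun T1 T2) (fun_map T1 T2 h1 h2)"
proof -
  let ?T = "TFun T1 T2" and ?F = "fun_map T1 T2 h1 h2" and ?ap = "m_app M (TFun T1 T2)"
  have mono: "R ?T (?F f) (?F g)" if "f \<in> D ?T" "g \<in> D ?T" "R ?T f g" for f g
  proof -
    have "\<forall>x\<in>D T1. R T2 (h2 (?ap f (h1 x))) (h2 (?ap g (h1 x)))"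
      using le_fun_iff[OF c that(1,2)] that(3) cont_endo_mono[OF h2] app_in[OF c] that cont_endo_in[OF h1]
      by auto
    then show ?thesis using le_fun_iff[OF c fun_map(1)[OF c that(1)] fun_map(1)[OF c that(2)]]
      fun_map(2)[OF c that(1)] fun_map(2)[OF c that(2)] by simp
  qed
  have "is_lub (D ?T) (R ?T) (?F ` S) (?F h)" if a: "directed_in (D ?T) (R ?T) S" "is_lub (D ?T) (R ?T) S h" for S h
  proof (rule fun_is_lubI[OF c])
    have SD: "S \<subseteq> D ?T" and hD: "h \<in> D ?T" using a unfolding directed_in_def is_lub_def by auto
    show "?F ` S \<subseteq> D ?T" "?F h \<in> D ?T" using fun_map(1)[OF c] SD hD by auto
    show "\<forall>x\<in>D T1. is_lub (D T2) (R T2) ((\<lambda>f. ?ap f x) ` ?F ` S) (?ap (?F h) x)"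
    proof
      fix x assume x: "x \<in> D T1"
      have hx: "h1 x \<in> D T1" using cont_endo_in[OF h1 x] .
      have "directed_in (D T2) (R T2) ((\<lambda>f. ?ap f (h1 x)) ` S)"
        by (rule directed_in_image[OF a(1)]) (use app_in[OF c _ hx] le_fun_iff[OF c] hx in auto)
      then have "is_lub (D T2) (R T2) (h2 ` (\<lambda>f. ?ap f (h1 x)) ` S) (h2 (?ap h (h1 x)))"
        using cont_endo_lub[OF h2 _ fun_lub[OF c a hx]] by blast
      moreover have "(\<lambda>f. ?ap f x) ` ?F ` S = h2 ` (\<lambda>f. ?ap f (h1 x)) ` S"
        using fun_map(2)[OF c] SD x by (auto simp: image_iff subset_iff)
      ultimately show "is_lub (D T2) (R T2) ((\<lambda>f. ?ap f x) ` ?F ` S) (?ap (?F h) x)"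
        using fun_map(2)[OF c hD] x by simp
    qed
  qed
  then show ?thesis unfolding cont_endo_def scott_cont_def using fun_map(1)[OF c] mono by blast
qed

end

lemma prod_map_le:
  assumes c: "closed_ty (TProd T1 T2)" and h: "cont_endo T1 h1" "cont_endo T2 h2" "cont_endo T1 h1'" "cont_endo T2 h2'"
    and le: "pointwise_le T1 h1 h1'" "pointwise_le T2 h2 h2'"
  shows "pointwise_le (TProd T1 T2) (prod_map T1 T2 h1 h2) (prod_map T1 T2 h1' h2')"
  unfolding pointwise_le_def
proof
  fix x assume x: "x \<in> D (TProd T1 T2)"
  show "R (TProd T1 T2) (prod_map T1 T2 h1 h2 x) (prod_map T1 T2 h1' h2' x)"
    using le_prod_iff[OF c prod_map(1)[OF h(1,2) c x] prod_map(1)[OF h(3,4) c x]]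
      prod_map[OF h(1,2) c x] prod_map[OF h(3,4) c x] le pi_in[OF c x] unfolding pointwise_le_def by simp
qed

lemma fun_map_le:
  assumes c: "closed_ty (TFun T1 T2)" and h: "cont_endo T1 h1" "cont_endo T2 h2" "cont_endo T1 h1'" "cont_endo T2 h2'"
    and le: "pointwise_le T1 h1 h1'" "pointwise_le T2 h2 h2'"
  shows "pointwise_le (TFun T1 T2) (fun_map T1 T2 h1 h2) (fun_map T1 T2 h1' h2')"
  unfolding pointwise_le_def
proof
  let ?T = "TFun T1 T2" and ?ap = "m_app M (TFun T1 T2)"
  have cs: "closed_ty T1" "closed_ty T2" using c by auto
  fix f assume f: "f \<in> D ?T"
  have "R T2 (h2 (?ap f (h1 x))) (h2' (?ap f (h1' x)))" if x: "x \<in> D T1" for x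
  proof -
    have hx: "h1 x \<in> D T1" "h1' x \<in> D T1" using cont_endo_in[OF h(1) x] cont_endo_in[OF h(3) x] by auto
    then have "R T2 (?ap f (h1 x)) (?ap f (h1' x))"
      using app_mono[OF c f] le(1) x unfolding pointwise_le_def by blast
    then have "R T2 (h2 (?ap f (h1 x))) (h2 (?ap f (h1' x)))"
      using cont_endo_mono[OF h(2)] app_in[OF c f] hx by blast
    moreover have "R T2 (h2 (?ap f (h1' x))) (h2' (?ap f (h1' x)))"
      using le(2) app_in[OF c f hx(2)] unfolding pointwise_le_def by blast
    ultimately show ?thesis
      using R_trans[OF cs(2) cont_endo_in[OF h(2) app_in[OF c f hx(1)]] cont_endo_in[OF h(2) app_in[OF c f hx(2)]]
        cont_endo_in[OF h(4) app_in[OF c f hx(2)]]] by blast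
  qed
  then show "R ?T (fun_map T1 T2 h1 h2 f) (fun_map T1 T2 h1' h2' f)"
    using le_fun_iff[OF c fun_map(1)[OF h(1,2) c f] fun_map(1)[OF h(3,4) c f]]
      fun_map(2)[OF h(1,2) c f] fun_map(2)[OF h(3,4) c f] by simp
qed

definition sum_map :: "ty \<Rightarrow> ty \<Rightarrow> ('u \<Rightarrow> 'u) \<Rightarrow> ('u \<Rightarrow> 'u) \<Rightarrow> 'u \<Rightarrow> 'u" where
  "sum_map T1 T2 h1 h2 x =
     (if \<exists>y\<in>D T1. x = m_inj1 M (TSum T1 T2) y
      then m_inj1 M (TSum T1 T2) (h1 (THE y. y \<in> D T1 \<and> x = m_inj1 M (TSum T1 T2) y))
      else if \<exists>y\<in>D T2. x = m_inj2 M (TSum T1 T2) y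
      then m_inj2 M (TSum T1 T2) (h2 (THE y. y \<in> D T2 \<and> x = m_inj2 M (TSum T1 T2) y))
      else x)"

context
  fixes T1 T2
  assumes c: "closed_ty (TSum T1 T2)"
begin

lemma sum_map_inj:
  assumes y: "y \<in> D (pick k T1 T2)"
  shows "sum_map T1 T2 h1 h2 (sum_inj k (TSum T1 T2) y) = sum_inj k (TSum T1 T2) (pick k h1 h2 y)"
proof (cases k)
  case True
  have "(THE y'. y' \<in> D T1 \<and> m_inj1 M (TSum T1 T2) y = m_inj1 M (TSum T1 T2) y') = y"
    using y True sum_inj_eq_iff[OF c, of _ True _ True] by (intro the_equality) auto
  then show ?thesis unfolding sum_map_def using y True by auto
next
  case False
  have "(THE y'. y' \<in> D T2 \<and> m_inj2 M (TSum T1 T2) y = m_inj2 M (TSum T1 T2) y') = y"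
    using y False sum_inj_eq_iff[OF c, of _ False _ False] by (intro the_equality) auto
  moreover have "\<not> (\<exists>y'\<in>D T1. m_inj2 M (TSum T1 T2) y = m_inj1 M (TSum T1 T2) y')"
    using y False sum_inj_eq_iff[OF c, of y False _ True] by auto
  ultimately show ?thesis unfolding sum_map_def using y False by auto
qed

lemma sum_map_bottom: "sum_map T1 T2 h1 h2 (bottomM M (TSum T1 T2)) = bottomM M (TSum T1 T2)"
proof -
  have "\<not> (\<exists>y\<in>D T1. bottomM M (TSum T1 T2) = m_inj1 M (TSum T1 T2) y)"
    "\<not> (\<exists>y\<in>D T2. bottomM M (TSum T1 T2) = m_inj2 M (TSum T1 T2) y)"
    using sum_inj_ne_bottom[OF c, of _ True] sum_inj_ne_bottom[OF c, of _ False] by force+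
  then show ?thesis unfolding sum_map_def by auto
qed

context
  fixes h1 h2
  assumes h1: "cont_endo T1 h1" and h2: "cont_endo T2 h2"
begin

lemma cont_endo_pick: "cont_endo (pick k T1 T2) (pick k h1 h2)"
  using h1 h2 by (cases k) auto

lemma sum_map_in:
  assumes x: "x \<in> D (TSum T1 T2)"
  shows "sum_map T1 T2 h1 h2 x \<in> D (TSum T1 T2)"
  using sum_cases[OF c x]
proof cases
  case 1 then show ?thesis by (simp add: sum_map_bottom bottomM_in[OF c])
next
  case (2 k y)
  then show ?thesis by (simp add: sum_map_inj sum_inj_in[OF c] cont_endo_in[OF cont_endo_pick])
qed

lemma sum_map_mono:
  assumes x: "x \<in> D (TSum T1 T2)" and y: "y \<in> D (TSum T1 T2)" and le: "R (TSum T1 T2) x y"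
  shows "R (TSum T1 T2) (sum_map T1 T2 h1 h2 x) (sum_map T1 T2 h1 h2 y)"
  using sum_cases[OF c x]
proof cases
  case 1 then show ?thesis using sum_map_bottom bottomM_least[OF c sum_map_in[OF y]] by simp
next
  case (2 k x')
  then obtain y' where y': "y' \<in> D (pick k T1 T2)" "y = sum_inj k (TSum T1 T2) y'" "R (pick k T1 T2) x' y'"
    using above_sum_inj[OF c _ y] le by blast
  then have "R (pick k T1 T2) (pick k h1 h2 x') (pick k h1 h2 y')"
    using cont_endo_mono[OF cont_endo_pick] 2 by blast
  then show ?thesis using 2 y' sum_map_inj sum_inj_le_iff[OF c] cont_endo_in[OF cont_endo_pick] by simp
qed

lemma sum_map_cont: "cont_endo (TSum T1 T2) (sum_map T1 T2 h1 h2)"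
proof -
  let ?T = "TSum T1 T2" and ?F = "sum_map T1 T2 h1 h2"
  have "is_lub (D ?T) (R ?T) (?F ` S) (?F x)" if a: "directed_in (D ?T) (R ?T) S" "is_lub (D ?T) (R ?T) S x" for S x
  proof -
    have SD: "S \<subseteq> D ?T" and xD: "x \<in> D ?T" using a unfolding directed_in_def is_lub_def by auto
    have ub: "\<forall>w\<in>?F ` S. R ?T w (?F x)" using sum_map_mono SD xD a unfolding is_lub_def by auto
    show ?thesis
      using sum_cases[OF c xD]
    proof cases
      case 1
      then have "S = {bottomM M ?T}" using sum_lub_bottom[OF c a(1)] a(2) by simp
      then have "?F ` S = {?F x}" using 1 by simp
      then show ?thesis unfolding is_lub_def using sum_map_in[OF xD] R_refl[OF c] by auto
    next
      case (2 k x')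
      let ?U = "pick k T1 T2" and ?i = "sum_inj k ?T" and ?h = "pick k h1 h2"
      let ?S = "inj_preimage k T1 T2 S"
      have d: "directed_in (D ?U) (R ?U) ?S" and l: "is_lub (D ?U) (R ?U) ?S x'"
        using sum_lub_inj_directed[OF c a(1) 2(1)] sum_lub_inj_is_lub[OF c a(1) 2(1)] a(2) 2(2) by auto
      have lh: "is_lub (D ?U) (R ?U) (?h ` ?S) (?h x')" using cont_endo_lub[OF cont_endo_pick d l] .
      obtain y0 where y0: "y0 \<in> D ?U" "?i y0 \<in> S" using d unfolding directed_in_def inj_preimage_def by auto
      have "R ?T (?F x) z" if z: "z \<in> D ?T" "\<forall>w\<in>?F ` S. R ?T w z" for z
      proof -
        have "R ?T (?i (?h y0)) z" using z y0 sum_map_inj by force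
        then obtain z' where z': "z' \<in> D ?U" "z = ?i z'"
          using above_sum_inj[OF c cont_endo_in[OF cont_endo_pick] z(1)] y0 by blast
        have "\<forall>w\<in>?h ` ?S. R ?U w z'"
          using z z' sum_map_inj sum_inj_le_iff[OF c cont_endo_in[OF cont_endo_pick] z'(1)]
          unfolding inj_preimage_def by force
        then have "R ?U (?h x') z'" using lh z'(1) unfolding is_lub_def by blast
        then show ?thesis
          using 2 sum_map_inj z' sum_inj_le_iff[OF c cont_endo_in[OF cont_endo_pick] z'(1)] by simp
      qed
      then show ?thesis using ub sum_map_in[OF xD] unfolding is_lub_def by blast
    qed
  qed
  then show ?thesis unfolding cont_endo_def scott_cont_def using sum_map_in sum_map_mono by blast
qed

end

lemma sum_map_le:
  assumes h: "cont_endo T1 h1" "cont_endo T2 h2" "cont_endo T1 h1'" "cont_endo T2 h2'"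
    and le: "pointwise_le T1 h1 h1'" "pointwise_le T2 h2 h2'"
  shows "pointwise_le (TSum T1 T2) (sum_map T1 T2 h1 h2) (sum_map T1 T2 h1' h2')"
  unfolding pointwise_le_def
proof
  fix x assume x: "x \<in> D (TSum T1 T2)"
  show "R (TSum T1 T2) (sum_map T1 T2 h1 h2 x) (sum_map T1 T2 h1' h2' x)"
    using sum_cases[OF c x]
  proof cases
    case 1 then show ?thesis using sum_map_bottom R_refl[OF c bottomM_in[OF c]] by simp
  next
    case (2 k y)
    have "R (pick k T1 T2) (pick k h1 h2 y) (pick k h1' h2' y)"
      using le 2(1) unfolding pointwise_le_def by (cases k) auto
    then show ?thesis
      using 2 sum_map_inj sum_inj_le_iff[OF c] cont_endo_in[OF cont_endo_pick[OF h(1,2)]]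
        cont_endo_in[OF cont_endo_pick[OF h(3,4)]] by simp
  qed
qed

end

lemma act_prod:
  "act M \<rho> (TProd t s) = prod_map (csubst (fst \<circ> \<rho>) t) (csubst (fst \<circ> \<rho>) s) (act M \<rho> t) (act M \<rho> s)"
  by (simp add: prod_map_def Let_def fun_eq_iff)

lemma act_fun:
  "act M \<rho> (TFun t s) = fun_map (csubst (fst \<circ> \<rho>) t) (csubst (fst \<circ> \<rho>) s) (act M \<rho> t) (act M \<rho> s)"
  by (simp add: fun_map_def Let_def fun_eq_iff)

lemma act_sum:
  "act M \<rho> (TSum t s) = sum_map (csubst (fst \<circ> \<rho>) t) (csubst (fst \<circ> \<rho>) s) (act M \<rho> t) (act M \<rho> s)"
  by (simp add: sum_map_def Let_def fun_eq_iff)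

lemma act_mu:
  "act M \<rho> (TMu b t) = unroll_lub (TMu b (csubst ((fst \<circ> \<rho>)(b := TVar b)) t))
     (\<lambda>g. act M (\<rho>(b := (TMu b (csubst ((fst \<circ> \<rho>)(b := TVar b)) t), g))) t)"
  by (simp add: unroll_lub_def unroll_def Let_def full_SetCompr_eq fun_eq_iff)

definition env_cont :: "(nat \<Rightarrow> ty \<times> ('u \<Rightarrow> 'u)) \<Rightarrow> ty \<Rightarrow> bool" where
  "env_cont \<rho> t \<longleftrightarrow> (\<forall>b\<in>fv t. closed_ty (fst (\<rho> b)) \<and> cont_endo (fst (\<rho> b)) (snd (\<rho> b)))"

definition env_le :: "(nat \<Rightarrow> ty \<times> ('u \<Rightarrow> 'u)) \<Rightarrow> (nat \<Rightarrow> ty \<times> ('u \<Rightarrow> 'u)) \<Rightarrow> ty \<Rightarrow> bool" where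
  "env_le \<rho> \<rho>' t \<longleftrightarrow>
     (\<forall>b\<in>fv t. fst (\<rho>' b) = fst (\<rho> b) \<and> pointwise_le (fst (\<rho> b)) (snd (\<rho> b)) (snd (\<rho>' b)))"

lemma env_cont_subset: "env_cont \<rho> t \<Longrightarrow> fv s \<subseteq> fv t \<Longrightarrow> env_cont \<rho> s"
  unfolding env_cont_def by blast

lemma env_le_subset: "env_le \<rho> \<rho>' t \<Longrightarrow> fv s \<subseteq> fv t \<Longrightarrow> env_le \<rho> \<rho>' s"
  unfolding env_le_def by blast

lemma env_cont_closed: "env_cont \<rho> t \<Longrightarrow> closed_ty (csubst (fst \<circ> \<rho>) t)"
  unfolding env_cont_def by (rule csubst_closed_ty) auto

lemma env_le_csubst: "env_le \<rho> \<rho>' t \<Longrightarrow> csubst (fst \<circ> \<rho>') t = csubst (fst \<circ> \<rho>) t"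
  unfolding env_le_def by (rule csubst_cong) auto

lemma env_update_mu:
  assumes \<rho>: "env_cont \<rho> (TMu b t)" and t': "csubst ((fst \<circ> \<rho>)(b := TVar b)) t = t'"
  shows "closed_ty (TMu b t')" "csubst (fst \<circ> \<rho>(b := (TMu b t', h))) t = subst t' b (TMu b t')"
    "cont_endo (TMu b t') h \<Longrightarrow> env_cont (\<rho>(b := (TMu b t', h))) t"
proof -
  show cT: "closed_ty (TMu b t')" using env_cont_closed[OF \<rho>] t' by simp
  have "fst \<circ> \<rho>(b := (TMu b t', h)) = (fst \<circ> \<rho>)(b := TMu b t')" by (auto simp: fun_eq_iff)
  moreover have "subst t' b (TMu b t') = csubst ((fst \<circ> \<rho>)(b := TMu b t')) t"
    unfolding t'[symmetric] by (rule subst_csubst) (use \<rho> in \<open>auto simp: env_cont_def closed_ty_def\<close>)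
  ultimately show "csubst (fst \<circ> \<rho>(b := (TMu b t', h))) t = subst t' b (TMu b t')"
    by simp
  show "cont_endo (TMu b t') h \<Longrightarrow> env_cont (\<rho>(b := (TMu b t', h))) t"
    using \<rho> cT unfolding env_cont_def by auto
qed

definition act_cont_mono :: "(nat \<Rightarrow> ty \<times> ('u \<Rightarrow> 'u)) \<Rightarrow> ty \<Rightarrow> bool" where
  "act_cont_mono \<rho> t \<longleftrightarrow> cont_endo (csubst (fst \<circ> \<rho>) t) (act M \<rho> t) \<and>
     (\<forall>\<rho>'. env_cont \<rho>' t \<longrightarrow> env_le \<rho> \<rho>' t \<longrightarrow>
        pointwise_le (csubst (fst \<circ> \<rho>) t) (act M \<rho> t) (act M \<rho>' t))"

lemma act_cont_mono_binary:
  fixes C :: "ty \<Rightarrow> ty \<Rightarrow> ty" and F :: "ty \<Rightarrow> ty \<Rightarrow> ('u \<Rightarrow> 'u) \<Rightarrow> ('u \<Rightarrow> 'u) \<Rightarrow> 'u \<Rightarrow> 'u"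
  assumes act_C: "\<And>\<rho>. act M \<rho> (C t s) = F (csubst (fst \<circ> \<rho>) t) (csubst (fst \<circ> \<rho>) s) (act M \<rho> t) (act M \<rho> s)"
    and csubst_C: "\<And>\<sigma>. csubst \<sigma> (C t s) = C (csubst \<sigma> t) (csubst \<sigma> s)"
    and fv_C: "fv t \<subseteq> fv (C t s)" "fv s \<subseteq> fv (C t s)"
    and F_cont: "\<And>T1 T2 h1 h2. closed_ty (C T1 T2) \<Longrightarrow> cont_endo T1 h1 \<Longrightarrow> cont_endo T2 h2 \<Longrightarrow>
       cont_endo (C T1 T2) (F T1 T2 h1 h2)"
    and F_le: "\<And>T1 T2 h1 h2 h1' h2'. closed_ty (C T1 T2) \<Longrightarrow> cont_endo T1 h1 \<Longrightarrow> cont_endo T2 h2 \<Longrightarrow>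
       cont_endo T1 h1' \<Longrightarrow> cont_endo T2 h2' \<Longrightarrow> pointwise_le T1 h1 h1' \<Longrightarrow> pointwise_le T2 h2 h2' \<Longrightarrow>
       pointwise_le (C T1 T2) (F T1 T2 h1 h2) (F T1 T2 h1' h2')"
    and IH: "\<And>\<rho>. env_cont \<rho> t \<Longrightarrow> act_cont_mono \<rho> t" "\<And>\<rho>. env_cont \<rho> s \<Longrightarrow> act_cont_mono \<rho> s"
    and \<rho>: "env_cont \<rho> (C t s)"
  shows "act_cont_mono \<rho> (C t s)"
  unfolding act_cont_mono_def
proof (intro conjI allI impI)
  let ?T1 = "csubst (fst \<circ> \<rho>) t" and ?T2 = "csubst (fst \<circ> \<rho>) s"
  have c: "closed_ty (C ?T1 ?T2)" using env_cont_closed[OF \<rho>] csubst_C by simp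
  have \<rho>ts: "env_cont \<rho> t" "env_cont \<rho> s" using env_cont_subset[OF \<rho>] fv_C by auto
  have h: "cont_endo ?T1 (act M \<rho> t)" "cont_endo ?T2 (act M \<rho> s)"
    using IH(1)[OF \<rho>ts(1)] IH(2)[OF \<rho>ts(2)] unfolding act_cont_mono_def by auto
  show "cont_endo (csubst (fst \<circ> \<rho>) (C t s)) (act M \<rho> (C t s))"
    using F_cont[OF c h] act_C csubst_C by simp
  fix \<rho>' assume \<rho>': "env_cont \<rho>' (C t s)" and le: "env_le \<rho> \<rho>' (C t s)"
  have \<rho>'ts: "env_cont \<rho>' t" "env_cont \<rho>' s" using env_cont_subset[OF \<rho>'] fv_C by auto
  have le_ts: "env_le \<rho> \<rho>' t" "env_le \<rho> \<rho>' s" using env_le_subset[OF le] fv_C by auto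
  have eq: "csubst (fst \<circ> \<rho>') t = ?T1" "csubst (fst \<circ> \<rho>') s = ?T2" using env_le_csubst le_ts by auto
  have h': "cont_endo ?T1 (act M \<rho>' t)" "cont_endo ?T2 (act M \<rho>' s)"
    using IH(1)[OF \<rho>'ts(1)] IH(2)[OF \<rho>'ts(2)] eq unfolding act_cont_mono_def by auto
  have "pointwise_le ?T1 (act M \<rho> t) (act M \<rho>' t)" "pointwise_le ?T2 (act M \<rho> s) (act M \<rho>' s)"
    using IH(1)[OF \<rho>ts(1)] IH(2)[OF \<rho>ts(2)] \<rho>'ts le_ts unfolding act_cont_mono_def by auto
  then show "pointwise_le (csubst (fst \<circ> \<rho>) (C t s)) (act M \<rho> (C t s)) (act M \<rho>' (C t s))"
    using F_le[OF c h h'] act_C csubst_C eq by simp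
qed

lemma unroll_lub_le:
  assumes c: "closed_ty (TMu a t)"
    and A: "\<And>g. cont_endo (TMu a t) g \<Longrightarrow> cont_endo (subst t a (TMu a t)) (A g)"
      "\<And>g g'. cont_endo (TMu a t) g \<Longrightarrow> cont_endo (TMu a t) g' \<Longrightarrow> pointwise_le (TMu a t) g g' \<Longrightarrow>
         pointwise_le (subst t a (TMu a t)) (A g) (A g')"
    and A': "\<And>g. cont_endo (TMu a t) g \<Longrightarrow> cont_endo (subst t a (TMu a t)) (A' g)"
      "\<And>g g'. cont_endo (TMu a t) g \<Longrightarrow> cont_endo (TMu a t) g' \<Longrightarrow> pointwise_le (TMu a t) g g' \<Longrightarrow>
         pointwise_le (subst t a (TMu a t)) (A' g) (A' g')"
    and le: "\<And>n. pointwise_le (TMu a t) (unroll (TMu a t) A n) (unroll (TMu a t) A' n)"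
  shows "pointwise_le (TMu a t) (unroll_lub (TMu a t) A) (unroll_lub (TMu a t) A')"
  unfolding pointwise_le_def
proof
  let ?T = "TMu a t"
  fix x assume x: "x \<in> D ?T"
  note l = unroll_lub_is_lub[where A=A, OF c A x] and l' = unroll_lub_is_lub[where A=A', OF c A' x]
  have "R ?T (unroll ?T A n x) (unroll_lub ?T A' x)" for n
  proof (rule R_trans[OF c unroll_in[where A=A, OF c A(1) x] unroll_in[where A=A', OF c A'(1) x] is_lub_in[OF l']])
    show "R ?T (unroll ?T A n x) (unroll ?T A' n x)" using le x unfolding pointwise_le_def by blast
    show "R ?T (unroll ?T A' n x) (unroll_lub ?T A' x)" using l' unfolding is_lub_def by blast
  qed
  then show "R ?T (unroll_lub ?T A x) (unroll_lub ?T A' x)" using l is_lub_in[OF l'] unfolding is_lub_def by blast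
qed

lemma act_cont_mono_mu:
  assumes IH: "\<And>\<rho>. env_cont \<rho> t \<Longrightarrow> act_cont_mono \<rho> t" and \<rho>: "env_cont \<rho> (TMu b t)"
  shows "act_cont_mono \<rho> (TMu b t)"
  unfolding act_cont_mono_def
proof (intro conjI allI impI)
  define t' where "t' = csubst ((fst \<circ> \<rho>)(b := TVar b)) t"
  define A where "A \<rho>' g = act M (\<rho>'(b := (TMu b t', g))) t" for \<rho>' g
  have c: "closed_ty (TMu b t')" using env_update_mu(1)[OF \<rho> t'_def[symmetric]] .
  have act_eq: "act M \<rho>' (TMu b t) = unroll_lub (TMu b t') (A \<rho>')"
    if "csubst ((fst \<circ> \<rho>')(b := TVar b)) t = t'" for \<rho>'
    unfolding A_def using act_mu[of \<rho>' b t] that by simp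
  have A_cont: "cont_endo (subst t' b (TMu b t')) (A \<rho>' g)"
    if "env_cont \<rho>' (TMu b t)" "csubst ((fst \<circ> \<rho>')(b := TVar b)) t = t'" "cont_endo (TMu b t') g" for \<rho>' g
    using IH[OF env_update_mu(3)[OF that]] env_update_mu(2)[OF that(1,2)]
    unfolding act_cont_mono_def A_def by simp
  have A_le: "pointwise_le (subst t' b (TMu b t')) (A \<rho>1 g) (A \<rho>2 g')"
    if \<rho>1: "env_cont \<rho>1 (TMu b t)" "csubst ((fst \<circ> \<rho>1)(b := TVar b)) t = t'"
      and \<rho>2: "env_cont \<rho>2 (TMu b t)" "csubst ((fst \<circ> \<rho>2)(b := TVar b)) t = t'"
      and le: "env_le \<rho>1 \<rho>2 (TMu b t)"
      and g: "cont_endo (TMu b t') g" "cont_endo (TMu b t') g'" "pointwise_le (TMu b t') g g'" for \<rho>1 \<rho>2 g g'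
  proof -
    have "env_le (\<rho>1(b := (TMu b t', g))) (\<rho>2(b := (TMu b t', g'))) t"
      using le g(3) unfolding env_le_def by auto
    then show ?thesis
      using IH[OF env_update_mu(3)[OF \<rho>1 g(1)]] env_update_mu(3)[OF \<rho>2 g(2)] env_update_mu(2)[OF \<rho>1]
      unfolding act_cont_mono_def A_def by simp
  qed
  have refl_env: "env_le \<rho>' \<rho>' (TMu b t)" if "env_cont \<rho>' (TMu b t)" for \<rho>'
    using that pointwise_le_refl unfolding env_cont_def env_le_def by auto
  note A\<rho>_cont = A_cont[OF \<rho> t'_def[symmetric]]
  note A\<rho>_mono = A_le[OF \<rho> t'_def[symmetric] \<rho> t'_def[symmetric] refl_env[OF \<rho>]]
  show "cont_endo (csubst (fst \<circ> \<rho>) (TMu b t)) (act M \<rho> (TMu b t))"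
    using unroll_lub_cont[where A="A \<rho>", OF c A\<rho>_cont A\<rho>_mono] act_eq t'_def by simp
  fix \<rho>' assume \<rho>': "env_cont \<rho>' (TMu b t)" and le: "env_le \<rho> \<rho>' (TMu b t)"
  have t'_eq: "csubst ((fst \<circ> \<rho>')(b := TVar b)) t = t'"
    unfolding t'_def by (rule csubst_cong) (use le in \<open>auto simp: env_le_def\<close>)
  note A\<rho>'_cont = A_cont[OF \<rho>' t'_eq]
  note A\<rho>'_mono = A_le[OF \<rho>' t'_eq \<rho>' t'_eq refl_env[OF \<rho>']]
  have iter_le: "pointwise_le (TMu b t') (unroll (TMu b t') (A \<rho>) n) (unroll (TMu b t') (A \<rho>') n)" for n
    by (rule unroll_le[where A="A \<rho>" and A'="A \<rho>'", OF c A\<rho>_cont A\<rho>'_cont A_le[OF \<rho> t'_def[symmetric] \<rho>' t'_eq le]])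
  have "pointwise_le (TMu b t') (unroll_lub (TMu b t') (A \<rho>)) (unroll_lub (TMu b t') (A \<rho>'))"
    by (rule unroll_lub_le[where A="A \<rho>" and A'="A \<rho>'", OF c A\<rho>_cont A\<rho>_mono A\<rho>'_cont A\<rho>'_mono iter_le])
  then show "pointwise_le (csubst (fst \<circ> \<rho>) (TMu b t)) (act M \<rho> (TMu b t)) (act M \<rho>' (TMu b t))"
    using act_eq t'_eq t'_def by simp
qed

lemma act_cont_mono_all: "env_cont \<rho> t \<Longrightarrow> act_cont_mono \<rho> t"
proof (induction t arbitrary: \<rho>)
  case TUnit
  then show ?case
    using cont_endo_id pointwise_le_refl[OF closed_ty_simps(1) cont_endo_id]
    unfolding act_cont_mono_def by (simp add: id_def)
next
  case (TVar b)
  then show ?case unfolding act_cont_mono_def env_cont_def env_le_def by auto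
next
  case (TProd t s)
  show ?case
    by (rule act_cont_mono_binary[OF act_prod _ _ _ prod_map_cont prod_map_le TProd.IH TProd.prems]) auto
next
  case (TFun t s)
  show ?case
    by (rule act_cont_mono_binary[OF act_fun _ _ _ fun_map_cont fun_map_le TFun.IH TFun.prems]) auto
next
  case (TSum t s)
  show ?case
    by (rule act_cont_mono_binary[OF act_sum _ _ _ sum_map_cont sum_map_le TSum.IH TSum.prems]) auto
next
  case (TMu b t)
  then show ?case using act_cont_mono_mu by blast
qed

section \<open>Definability of compact elements\<close>

text \<open>For g = id this says that the formulas separate the points of the domain.\<close>

definition form_separated :: "ty \<Rightarrow> ('u \<Rightarrow> 'u) \<Rightarrow> bool" where
  "form_separated T g \<longleftrightarrow> (\<forall>x\<in>D T. \<forall>z\<in>D T. \<not> R T (g x) z \<longrightarrow>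
     (\<exists>\<delta>. wf_form T \<delta> \<and> x \<in> sem M T \<delta> \<and> z \<notin> sem M T \<delta>))"

lemma form_separatedD:
  "form_separated T g \<Longrightarrow> x \<in> D T \<Longrightarrow> z \<in> D T \<Longrightarrow> \<not> R T (g x) z \<Longrightarrow>
   \<exists>\<delta>. wf_form T \<delta> \<and> x \<in> sem M T \<delta> \<and> z \<notin> sem M T \<delta>"
  unfolding form_separated_def by blast

definition definable_below :: "ty \<Rightarrow> 'u \<Rightarrow> 'u set" where
  "definable_below T x = {d \<in> D T. R T d x \<and> (\<exists>\<psi>. wf_form T \<psi> \<and> sem M T \<psi> = upset M T d)}"

lemma definable_below_directed:
  assumes c: "closed_ty T" and x: "x \<in> D T"
  shows "directed_in (D T) (R T) (definable_below T x)"
  unfolding directed_in_def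
proof (intro conjI ballI)
  show "definable_below T x \<subseteq> D T" unfolding definable_below_def by auto
  have "wf_form T FTrue" "sem M T FTrue = upset M T (bottomM M T)" using upset_bottomM[OF c] by simp_all
  then have "bottomM M T \<in> definable_below T x" unfolding definable_below_def
    using bottomM_in[OF c] bottomM_least[OF c x] by blast
  then show "definable_below T x \<noteq> {}" by auto
  fix d1 d2 assume "d1 \<in> definable_below T x" "d2 \<in> definable_below T x"
  then obtain \<psi>1 \<psi>2 where \<psi>: "wf_form T \<psi>1" "sem M T \<psi>1 = upset M T d1" "wf_form T \<psi>2" "sem M T \<psi>2 = upset M T d2"
    and d: "d1 \<in> D T" "d2 \<in> D T" "R T d1 x" "R T d2 x" unfolding definable_below_def by blast
  have wf: "wf_form T (FAnd \<psi>1 \<psi>2)" using \<psi> by simp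
  have x_in: "x \<in> sem M T (FAnd \<psi>1 \<psi>2)" using \<psi> d x unfolding upset_def by simp
  then have "sem M T (FAnd \<psi>1 \<psi>2) \<noteq> {}" by blast
  then obtain e where e: "compact_el (D T) (R T) e" "sem M T (FAnd \<psi>1 \<psi>2) = upset M T e"
    using sem_principal[OF c wf] by blast
  have eD: "e \<in> D T" using e(1) unfolding compact_el_def by blast
  have "e \<in> sem M T (FAnd \<psi>1 \<psi>2)" using e in_upset_self[OF c eD] by simp
  then have "R T d1 e" "R T d2 e" using \<psi> unfolding upset_def by auto
  moreover have "R T e x" using x_in e unfolding upset_def by auto
  ultimately show "\<exists>z\<in>definable_below T x. R T d1 z \<and> R T d2 z"
    using eD wf e(2) unfolding definable_below_def by blast
qed

lemma separated_le_lub_definable_below: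
  assumes c: "closed_ty T" and h: "form_separated T h" and x: "x \<in> D T"
  shows "R T (h x) (lubM M T (definable_below T x))"
proof (rule ccontr)
  let ?L = "lubM M T (definable_below T x)"
  have l: "is_lub (D T) (R T) (definable_below T x) ?L"
    using lubM_is_lub[OF c definable_below_directed[OF c x]] .
  assume "\<not> R T (h x) ?L"
  then obtain \<psi> where \<psi>: "wf_form T \<psi>" "x \<in> sem M T \<psi>" "?L \<notin> sem M T \<psi>"
    using form_separatedD[OF h x is_lub_in[OF l]] by blast
  have "sem M T \<psi> \<noteq> {}" using \<psi>(2) by blast
  then obtain d where d: "compact_el (D T) (R T) d" "sem M T \<psi> = upset M T d"
    using sem_principal[OF c \<psi>(1)] by blast
  have "d \<in> D T" "R T d x" using d \<psi>(2) unfolding compact_el_def upset_def by auto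
  then have "d \<in> definable_below T x" unfolding definable_below_def using \<psi>(1) d(2) by blast
  then have "R T d ?L" using l unfolding is_lub_def by auto
  then have "?L \<in> sem M T \<psi>" using d is_lub_in[OF l] unfolding upset_def by auto
  then show False using \<psi>(3) by simp
qed

lemma separated_unit: "form_separated TUnit id"
  unfolding form_separated_def
proof (intro ballI impI)
  fix x z assume xz: "x \<in> D TUnit" "z \<in> D TUnit" "\<not> R TUnit (id x) z"
  have "x = m_top M" using xz bottomM_least[OF closed_ty_simps(1)] unit_dom by auto
  moreover have "z = bottomM M TUnit" using xz R_refl[OF closed_ty_simps(1)] unit_dom calculation by auto
  ultimately show "\<exists>\<delta>. wf_form TUnit \<delta> \<and> x \<in> sem M TUnit \<delta> \<and> z \<notin> sem M TUnit \<delta>"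
    using bottom_ne_top by (intro exI[of _ FUnit]) auto
qed

lemma separated_prod_map:
  assumes c: "closed_ty (TProd T1 T2)" and h: "cont_endo T1 h1" "cont_endo T2 h2"
    and sep: "form_separated T1 h1" "form_separated T2 h2"
  shows "form_separated (TProd T1 T2) (prod_map T1 T2 h1 h2)"
  unfolding form_separated_def
proof (intro ballI impI)
  let ?T = "TProd T1 T2" and ?p1 = "m_pi1 M (TProd T1 T2)" and ?p2 = "m_pi2 M (TProd T1 T2)"
  fix x z assume x: "x \<in> D ?T" and z: "z \<in> D ?T" and nle: "\<not> R ?T (prod_map T1 T2 h1 h2 x) z"
  have "\<not> R T1 (h1 (?p1 x)) (?p1 z) \<or> \<not> R T2 (h2 (?p2 x)) (?p2 z)"
    using nle le_prod_iff[OF c prod_map(1)[OF h c x] z] prod_map[OF h c x] by auto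
  then show "\<exists>\<delta>. wf_form ?T \<delta> \<and> x \<in> sem M ?T \<delta> \<and> z \<notin> sem M ?T \<delta>"
  proof
    assume "\<not> R T1 (h1 (?p1 x)) (?p1 z)"
    then obtain \<delta> where "wf_form T1 \<delta>" "?p1 x \<in> sem M T1 \<delta>" "?p1 z \<notin> sem M T1 \<delta>"
      using sep(1) pi_in[OF c x] pi_in[OF c z] unfolding form_separated_def by blast
    then show ?thesis using x by (intro exI[of _ "FPi1 \<delta>"]) auto
  next
    assume "\<not> R T2 (h2 (?p2 x)) (?p2 z)"
    then obtain \<delta> where "wf_form T2 \<delta>" "?p2 x \<in> sem M T2 \<delta>" "?p2 z \<notin> sem M T2 \<delta>"
      using sep(2) pi_in[OF c x] pi_in[OF c z] unfolding form_separated_def by blast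
    then show ?thesis using x by (intro exI[of _ "FPi2 \<delta>"]) auto
  qed
qed

lemma separated_sum_map:
  assumes c: "closed_ty (TSum T1 T2)" and h: "cont_endo T1 h1" "cont_endo T2 h2"
    and sep: "form_separated T1 h1" "form_separated T2 h2"
  shows "form_separated (TSum T1 T2) (sum_map T1 T2 h1 h2)"
  unfolding form_separated_def
proof (intro ballI impI)
  let ?T = "TSum T1 T2"
  fix x z assume x: "x \<in> D ?T" and z: "z \<in> D ?T" and nle: "\<not> R ?T (sum_map T1 T2 h1 h2 x) z"
  show "\<exists>\<delta>. wf_form ?T \<delta> \<and> x \<in> sem M ?T \<delta> \<and> z \<notin> sem M ?T \<delta>"
    using sum_cases[OF c x]
  proof cases
    case 1 then show ?thesis using nle sum_map_bottom[OF c] bottomM_least[OF c z] by simp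
  next
    case (2 k y)
    let ?U = "pick k T1 T2" and ?i = "sum_inj k ?T"
    have sem_inj: "sem M ?T (FInj k \<delta>) = ?i ` sem M ?U \<delta>" for \<delta> by (cases k) simp_all
    have wf_inj: "wf_form ?T (FInj k \<delta>) \<longleftrightarrow> wf_form ?U \<delta>" for \<delta> by (cases k) simp_all
    have hy: "pick k h1 h2 y \<in> D ?U" using cont_endo_in[OF cont_endo_pick[OF c h] 2(1)] .
    have nle': "\<not> R ?T (?i (pick k h1 h2 y)) z" using nle 2 sum_map_inj[OF c] by simp
    have "\<exists>\<delta>. wf_form ?U \<delta> \<and> y \<in> sem M ?U \<delta> \<and> z \<notin> ?i ` sem M ?U \<delta>"
    proof (cases "\<exists>w\<in>D ?U. z = ?i w")
      case True
      then obtain w where w: "w \<in> D ?U" "z = ?i w" by blast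
      have "form_separated ?U (pick k h1 h2)" using sep by (cases k) simp_all
      moreover have "\<not> R ?U (pick k h1 h2 y) w" using nle' w sum_inj_le_iff[OF c hy] by simp
      ultimately obtain \<delta> where \<delta>: "wf_form ?U \<delta>" "y \<in> sem M ?U \<delta>" "w \<notin> sem M ?U \<delta>"
        using 2(1) w(1) unfolding form_separated_def by blast
      moreover have "z \<notin> ?i ` sem M ?U \<delta>"
        using \<delta> w sem_subset[OF closed_summand[OF c] \<delta>(1)] sum_inj_eq_iff[OF c] by blast
      ultimately show ?thesis by blast
    next
      case False
      then show ?thesis using 2(1) by (intro exI[of _ FTrue]) auto
    qed
    then show ?thesis using 2 sem_inj wf_inj by blast
  qed
qed

text \<open>Separation at the argument type is used through approximation: h1 x lies below the lub of
  the definable compact elements below x, so one of them already witnesses the failure.\<close>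

lemma separated_fun_map:
  assumes c: "closed_ty (TFun T1 T2)" and h: "cont_endo T1 h1" "cont_endo T2 h2"
    and sep: "form_separated T1 h1" "form_separated T2 h2"
  shows "form_separated (TFun T1 T2) (fun_map T1 T2 h1 h2)"
  unfolding form_separated_def
proof (intro ballI impI)
  let ?T = "TFun T1 T2" and ?ap = "m_app M (TFun T1 T2)"
  have cs: "closed_ty T1" "closed_ty T2" using c by auto
  fix f g assume f: "f \<in> D ?T" and g: "g \<in> D ?T" and nle: "\<not> R ?T (fun_map T1 T2 h1 h2 f) g"
  obtain x where x: "x \<in> D T1" "\<not> R T2 (h2 (?ap f (h1 x))) (?ap g x)"
    using nle le_fun_iff[OF c fun_map(1)[OF h c f] g] fun_map(2)[OF h c f] by auto
  have hx: "h1 x \<in> D T1" using cont_endo_in[OF h(1) x(1)] .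
  obtain \<delta> where \<delta>: "wf_form T2 \<delta>" "?ap f (h1 x) \<in> sem M T2 \<delta>" "?ap g x \<notin> sem M T2 \<delta>"
    using form_separatedD[OF sep(2) app_in[OF c f hx] app_in[OF c g x(1)] x(2)] by blast
  have "sem M T2 \<delta> \<noteq> {}" using \<delta>(2) by blast
  then obtain e where e: "compact_el (D T2) (R T2) e" "sem M T2 \<delta> = upset M T2 e"
    using sem_principal[OF cs(2) \<delta>(1)] by blast
  let ?B = "definable_below T1 x" let ?L = "lubM M T1 ?B"
  have dir: "directed_in (D T1) (R T1) ?B" using definable_below_directed[OF cs(1) x(1)] .
  have l: "is_lub (D T1) (R T1) ?B ?L" using lubM_is_lub[OF cs(1) dir] .
  have eD: "e \<in> D T2" using e(1) unfolding compact_el_def by blast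
  have "R T2 e (?ap f (h1 x))" using \<delta>(2) e(2) unfolding upset_def by auto
  moreover have "R T2 (?ap f (h1 x)) (?ap f ?L)"
    using app_mono[OF c f hx is_lub_in[OF l] separated_le_lub_definable_below[OF cs(1) sep(1) x(1)]] .
  ultimately have "R T2 e (?ap f ?L)"
    using R_trans[OF cs(2) eD app_in[OF c f hx] app_in[OF c f is_lub_in[OF l]]] by blast
  moreover have "directed_in (D T2) (R T2) (?ap f ` ?B)"
    by (rule directed_in_image[OF dir]) (use app_in[OF c f] app_mono[OF c f] in auto)
  ultimately obtain d0 where d0: "d0 \<in> ?B" "R T2 e (?ap f d0)"
    using e(1) scott_cont_lub[OF app_cont[OF c f] dir l] unfolding compact_el_def by blast
  then obtain \<psi> where \<psi>: "wf_form T1 \<psi>" "sem M T1 \<psi> = upset M T1 d0" and d0D: "d0 \<in> D T1" "R T1 d0 x"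
    unfolding definable_below_def by blast
  have "?ap f y \<in> sem M T2 \<delta>" if "y \<in> sem M T1 \<psi>" for y
  proof -
    have y: "y \<in> D T1" "R T1 d0 y" using that \<psi> unfolding upset_def by auto
    have "R T2 e (?ap f y)"
      using R_trans[OF cs(2) eD app_in[OF c f d0D(1)] app_in[OF c f y(1)] d0(2) app_mono[OF c f d0D(1) y]] .
    then show ?thesis using e app_in[OF c f y(1)] unfolding upset_def by auto
  qed
  moreover have "x \<in> sem M T1 \<psi>" using \<psi> d0D x unfolding upset_def by auto
  ultimately show "\<exists>\<delta>'. wf_form ?T \<delta>' \<and> f \<in> sem M ?T \<delta>' \<and> g \<notin> sem M ?T \<delta>'"
    using f \<psi>(1) \<delta>(1,3) by (intro exI[of _ "FImp \<psi> \<delta>"]) auto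
qed

lemma separated_unroll_lub:
  assumes c: "closed_ty (TMu a t)"
    and A_cont: "\<And>g. cont_endo (TMu a t) g \<Longrightarrow> cont_endo (subst t a (TMu a t)) (A g)"
    and A_mono: "\<And>g g'. cont_endo (TMu a t) g \<Longrightarrow> cont_endo (TMu a t) g' \<Longrightarrow> pointwise_le (TMu a t) g g' \<Longrightarrow>
       pointwise_le (subst t a (TMu a t)) (A g) (A g')"
    and A_sep: "\<And>g. cont_endo (TMu a t) g \<Longrightarrow> form_separated (TMu a t) g \<Longrightarrow>
       form_separated (subst t a (TMu a t)) (A g)"
  shows "form_separated (TMu a t) (unroll_lub (TMu a t) A)"
proof -
  let ?T = "TMu a t" and ?U = "subst t a (TMu a t)"
  have unroll_sep: "form_separated ?T (unroll ?T A n)" for n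
  proof (induction n)
    case 0 then show ?case unfolding form_separated_def using bottomM_least[OF c] by (simp add: unroll_0)
  next
    case (Suc n)
    show ?case unfolding form_separated_def
    proof (intro ballI impI)
      fix x z assume x: "x \<in> D ?T" and z: "z \<in> D ?T" and nle: "\<not> R ?T (unroll ?T A (Suc n) x) z"
      have ux: "m_unfold M ?T x \<in> D ?U" "m_unfold M ?T z \<in> D ?U" using unfold_in[OF c] x z by auto
      have An: "cont_endo ?U (A (unroll ?T A n))" using A_cont[OF unroll_cont[where A=A, OF c A_cont]] .
      have "\<not> R ?U (A (unroll ?T A n) (m_unfold M ?T x)) (m_unfold M ?T z)"
        using nle le_fold_iff[OF c cont_endo_in[OF An ux(1)] ux(2)] fold_unfold[OF c z]
        by (simp add: unroll_Suc_apply)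
      then obtain \<delta> where "wf_form ?U \<delta>" "m_unfold M ?T x \<in> sem M ?U \<delta>" "m_unfold M ?T z \<notin> sem M ?U \<delta>"
        using form_separatedD[OF A_sep[OF unroll_cont[where A=A, OF c A_cont] Suc] ux] by blast
      then show "\<exists>\<delta>. wf_form ?T \<delta> \<and> x \<in> sem M ?T \<delta> \<and> z \<notin> sem M ?T \<delta>"
        using x by (intro exI[of _ "FFold \<delta>"]) auto
    qed
  qed
  show ?thesis unfolding form_separated_def
  proof (intro ballI impI)
    fix x z assume x: "x \<in> D ?T" and z: "z \<in> D ?T" and nle: "\<not> R ?T (unroll_lub ?T A x) z"
    obtain n where "\<not> R ?T (unroll ?T A n x) z"
      using unroll_lub_is_lub[where A=A, OF c A_cont A_mono x] z nle unfolding is_lub_def by blast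
    then show "\<exists>\<delta>. wf_form ?T \<delta> \<and> x \<in> sem M ?T \<delta> \<and> z \<notin> sem M ?T \<delta>"
      using form_separatedD[OF unroll_sep x z] by blast
  qed
qed

definition env_sep :: "(nat \<Rightarrow> ty \<times> ('u \<Rightarrow> 'u)) \<Rightarrow> ty \<Rightarrow> bool" where
  "env_sep \<rho> t \<longleftrightarrow> env_cont \<rho> t \<and> (\<forall>b\<in>fv t. form_separated (fst (\<rho> b)) (snd (\<rho> b)))"

lemma env_sep_subset: "env_sep \<rho> t \<Longrightarrow> fv s \<subseteq> fv t \<Longrightarrow> env_sep \<rho> s"
  unfolding env_sep_def using env_cont_subset by blast

lemma act_cont: "env_cont \<rho> t \<Longrightarrow> cont_endo (csubst (fst \<circ> \<rho>) t) (act M \<rho> t)"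
  using act_cont_mono_all unfolding act_cont_mono_def by blast

lemma act_separated_mu:
  assumes IH: "\<And>\<rho>. env_sep \<rho> t \<Longrightarrow> form_separated (csubst (fst \<circ> \<rho>) t) (act M \<rho> t)"
    and \<rho>: "env_sep \<rho> (TMu b t)"
  shows "form_separated (csubst (fst \<circ> \<rho>) (TMu b t)) (act M \<rho> (TMu b t))"
proof -
  define t' where "t' = csubst ((fst \<circ> \<rho>)(b := TVar b)) t"
  define A where "A g = act M (\<rho>(b := (TMu b t', g))) t" for g
  have \<rho>c: "env_cont \<rho> (TMu b t)" using \<rho> unfolding env_sep_def by blast
  note upd = env_update_mu[OF \<rho>c t'_def[symmetric]]
  have A_cont: "cont_endo (subst t' b (TMu b t')) (A g)" if "cont_endo (TMu b t') g" for g
    using act_cont[OF upd(3)[OF that]] upd(2) unfolding A_def by simp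
  have A_mono: "pointwise_le (subst t' b (TMu b t')) (A g) (A g')"
    if "cont_endo (TMu b t') g" "cont_endo (TMu b t') g'" "pointwise_le (TMu b t') g g'" for g g'
  proof -
    have "env_le (\<rho>(b := (TMu b t', g))) (\<rho>(b := (TMu b t', g'))) t"
      using that(3) \<rho>c pointwise_le_refl unfolding env_le_def env_cont_def by auto
    then show ?thesis
      using act_cont_mono_all[OF upd(3)[OF that(1)]] upd(3)[OF that(2)] upd(2)
      unfolding act_cont_mono_def A_def by simp
  qed
  have A_sep: "form_separated (subst t' b (TMu b t')) (A g)"
    if "cont_endo (TMu b t') g" "form_separated (TMu b t') g" for g
  proof -
    have "env_sep (\<rho>(b := (TMu b t', g))) t"
      using upd(3)[OF that(1)] that(2) \<rho> unfolding env_sep_def by auto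
    then show ?thesis using IH upd(2) unfolding A_def by metis
  qed
  have "form_separated (TMu b t') (unroll_lub (TMu b t') A)"
    by (rule separated_unroll_lub[OF upd(1)]) (use A_cont A_mono A_sep in auto)
  then show ?thesis using act_mu[of \<rho> b t] unfolding A_def t'_def by simp
qed

lemma act_separated: "env_sep \<rho> t \<Longrightarrow> form_separated (csubst (fst \<circ> \<rho>) t) (act M \<rho> t)"
proof (induction t arbitrary: \<rho>)
  case TUnit
  then show ?case using separated_unit by (simp add: id_def)
next
  case (TVar b)
  then show ?case unfolding env_sep_def by simp
next
  case (TProd t s)
  have \<rho>: "env_sep \<rho> t" "env_sep \<rho> s" using env_sep_subset[OF TProd.prems] by auto
  have c: "closed_ty (TProd (csubst (fst \<circ> \<rho>) t) (csubst (fst \<circ> \<rho>) s))"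
    using env_cont_closed TProd.prems unfolding env_sep_def by fastforce
  show ?case
    using separated_prod_map[OF c act_cont act_cont TProd.IH(1)[OF \<rho>(1)] TProd.IH(2)[OF \<rho>(2)]] \<rho>
    unfolding act_prod env_sep_def by (simp add: comp_def)
next
  case (TSum t s)
  have \<rho>: "env_sep \<rho> t" "env_sep \<rho> s" using env_sep_subset[OF TSum.prems] by auto
  have c: "closed_ty (TSum (csubst (fst \<circ> \<rho>) t) (csubst (fst \<circ> \<rho>) s))"
    using env_cont_closed TSum.prems unfolding env_sep_def by fastforce
  show ?case
    using separated_sum_map[OF c act_cont act_cont TSum.IH(1)[OF \<rho>(1)] TSum.IH(2)[OF \<rho>(2)]] \<rho>
    unfolding act_sum env_sep_def by (simp add: comp_def)
next
  case (TFun t s)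
  have \<rho>: "env_sep \<rho> t" "env_sep \<rho> s" using env_sep_subset[OF TFun.prems] by auto
  have c: "closed_ty (TFun (csubst (fst \<circ> \<rho>) t) (csubst (fst \<circ> \<rho>) s))"
    using env_cont_closed TFun.prems unfolding env_sep_def by fastforce
  show ?case
    using separated_fun_map[OF c act_cont act_cont TFun.IH(1)[OF \<rho>(1)] TFun.IH(2)[OF \<rho>(2)]] \<rho>
    unfolding act_fun env_sep_def by (simp add: comp_def)
next
  case (TMu b t)
  then show ?case using act_separated_mu by blast
qed

text \<open>The environment that sends every variable to (TUnit, id) interprets no variable; minimal
  invariance of the recursive types propagates to all closed types.\<close>

lemma act_closed_id: "closed_ty T \<Longrightarrow> x \<in> D T \<Longrightarrow> act M (\<lambda>_. (TUnit, id)) T x = x"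
proof (induction T arbitrary: x)
  case (TProd t s)
  have cs: "closed_ty t" "closed_ty s" using TProd.prems by auto
  then show ?case
    using TProd.IH pi_in[OF TProd.prems] pairM_eta[OF TProd.prems]
    by (simp del: act.simps add: act_prod prod_map_def csubst_closed_id)
next
  case (TSum t s)
  have c: "closed_ty (TSum t s)" and cs: "closed_ty t" "closed_ty s" using TSum.prems by auto
  show ?case
    using sum_cases[OF c TSum.prems(2)]
  proof cases
    case 1 then show ?thesis by (simp del: act.simps add: act_sum csubst_closed_id cs sum_map_bottom[OF c])
  next
    case (2 k y)
    then have "pick k (act M (\<lambda>_. (TUnit, id)) t) (act M (\<lambda>_. (TUnit, id)) s) y = y"
      using TSum.IH cs by (cases k) (auto simp: id_def)
    then show ?thesis using 2 by (simp del: act.simps add: act_sum csubst_closed_id cs sum_map_inj[OF c] id_def)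
  qed
next
  case (TFun t s)
  have c: "closed_ty (TFun t s)" and cs: "closed_ty t" "closed_ty s" using TFun.prems by auto
  have "env_cont (\<lambda>_. (TUnit, id)) t" "env_cont (\<lambda>_. (TUnit, id)) s"
    using cs unfolding env_cont_def closed_ty_def by auto
  then have h: "cont_endo t (act M (\<lambda>_. (TUnit, id)) t)" "cont_endo s (act M (\<lambda>_. (TUnit, id)) s)"
    using act_cont csubst_closed_id cs by fastforce+
  have "fun_map t s (act M (\<lambda>_. (TUnit, id)) t) (act M (\<lambda>_. (TUnit, id)) s) x = x"
    by (rule fun_ext[OF c fun_map(1)[OF h c TFun.prems(2)] TFun.prems(2)])
      (use fun_map(2)[OF h c TFun.prems(2)] TFun.IH cs app_in[OF c TFun.prems(2)] in simp)
  then show ?case by (simp del: act.simps add: act_fun csubst_closed_id cs id_def)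
next
  case (TMu a t)
  then show ?case using mu_axioms_inst(5) by blast
qed auto

lemma id_separated: "closed_ty T \<Longrightarrow> form_separated T id"
  using act_separated[of "\<lambda>_. (TUnit, id)" T] act_closed_id csubst_closed_id
  unfolding env_sep_def env_cont_def form_separated_def closed_ty_def by simp

lemma compact_definable:
  assumes c: "closed_ty T" and d: "compact_el (D T) (R T) d"
  shows "\<exists>\<delta>. wf_form T \<delta> \<and> upset M T d = sem M T \<delta>"
proof -
  have dD: "d \<in> D T" using d unfolding compact_el_def by blast
  let ?L = "lubM M T (definable_below T d)"
  have "R T d ?L" using separated_le_lub_definable_below[OF c id_separated[OF c] dD] by simp
  then obtain e where e: "e \<in> definable_below T d" "R T d e"
    using d definable_below_directed[OF c dD] lubM_is_lub[OF c definable_below_directed[OF c dD]]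
    unfolding compact_el_def by blast
  then have "e = d" using R_antisym[OF c] dD unfolding definable_below_def by auto
  then show ?thesis using e unfolding definable_below_def by auto
qed

end

theorem proposition5p8:
  fixes M :: "'u pmodel" and \<tau> :: ty
  assumes "pure_model M" and "closed_ty \<tau>"
  shows "(\<forall>\<delta>. wf_form \<tau> \<delta> \<and> sem M \<tau> \<delta> \<noteq> {} \<longrightarrow>
            (\<exists>d. compact_el (m_dom M \<tau>) (m_le M \<tau>) d \<and> sem M \<tau> \<delta> = upset M \<tau> d))
       \<and> (\<forall>d. compact_el (m_dom M \<tau>) (m_le M \<tau>) d \<longrightarrow>
            (\<exists>\<delta>. wf_form \<tau> \<delta> \<and> upset M \<tau> d = sem M \<tau> \<delta>))"
proof -
  interpret pure_interp M by (rule pure_interp.intro) (rule assms(1))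
  show ?thesis using sem_principal compact_definable assms(2) by blast
qed

end
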